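(* Let $q$ be odd and let $\mathcal U$ be a conic-BM unital with respect to $\ell_\infty$ in $\mathrm{PG}(2,q^2)$. Then for every point $Q\notin\mathcal U\cup\ell_\infty$, $\mathrm{pedal}(Q)$ is an arc.
   Context: Points of $\mathrm{PG}(2,q^2)$ have homogeneous coordinates $(x,y,z)$; $\ell_\infty$ is the line $z=0$. For $\alpha,\beta\in\mathbb{F}_{q^2}$ with $(\beta^q-\beta)^2+4\alpha^{q+1}$ a nonsquare in $\mathbb{F}_q$, the set $\mathcal U_{\alpha\beta}=\{(x,\alpha x^2+\beta x^{q+1}+r,1): x\in\mathbb{F}_{q^2}, r\in\mathbb{F}_q\}\cup\{(0,1,0)\}$ is an orthogonal Buekenhout–Metz unital with respect to $\ell_\infty$ (a set of $q^3+1$ points meeting every line in $1$ or $q+1$ points). A conic-BM unital with respect to $\ell_\infty$ is such a unital which contains a non-degenerate conic, equivalently one which is the union of $q$ non-degenerate conics pairwise meeting in the point $(0,1,0)$; up to a collineation fixing $\ell_\infty$ these are exactly the sets $\mathcal U_{\alpha\beta}$ with $\beta\in\mathbb{F}_q$. For a point $Q$ not on the unital, $\mathrm{pedal}(Q)$ is the set of points of contact of the $q+1$ tangent lines (lines meeting the unital in exactly one point) through $Q$. An arc is a set meeting every line in at most $2$ points. *)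

theory Defs
  imports Main
begin

type_synonym 'a ppoint = "('a \<times> 'a \<times> 'a) set"

definition pt :: "'a::field \<Rightarrow> 'a \<Rightarrow> 'a \<Rightarrow> 'a ppoint" where
  "pt x y z = {(c * x, c * y, c * z) | c. c \<noteq> 0}"

definition points :: "'a::field ppoint set" where
  "points = {pt x y z | x y z. (x, y, z) \<noteq> (0, 0, 0)}"

definition pline :: "'a::field \<Rightarrow> 'a \<Rightarrow> 'a \<Rightarrow> 'a ppoint set" where
  "pline a b c = {P \<in> points. \<forall>(x, y, z) \<in> P. a * x + b * y + c * z = 0}"

definition lines :: "'a::field ppoint set set" where
  "lines = {pline a b c | a b c. (a, b, c) \<noteq> (0, 0, 0)}"

definition line_inf :: "'a::field ppoint set" where
  "line_inf = pline 0 0 1"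

definition collineation :: "('a::field ppoint \<Rightarrow> 'a ppoint) \<Rightarrow> bool" where
  "collineation \<sigma> \<longleftrightarrow> bij_betw \<sigma> points points \<and> (\<forall>l \<in> lines. \<sigma> ` l \<in> lines)"

definition subF :: "nat \<Rightarrow> 'a::field set" where
  "subF q = {r. r ^ q = r}"

definition nonsquare_in_subF :: "nat \<Rightarrow> 'a::field \<Rightarrow> bool" where
  "nonsquare_in_subF q d \<longleftrightarrow> d \<in> subF q \<and> \<not> (\<exists>s \<in> subF q. s ^ 2 = d)"

definition U_ab :: "nat \<Rightarrow> 'a::field \<Rightarrow> 'a \<Rightarrow> 'a ppoint set" where
  "U_ab q \<alpha> \<beta> =
     {pt x (\<alpha> * x ^ 2 + \<beta> * x ^ (q + 1) + r) 1 | x r. r \<in> subF q} \<union> {pt 0 1 0}"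

definition BM_params_ok :: "nat \<Rightarrow> 'a::field \<Rightarrow> 'a \<Rightarrow> bool" where
  "BM_params_ok q \<alpha> \<beta> \<longleftrightarrow> nonsquare_in_subF q ((\<beta> ^ q - \<beta>) ^ 2 + 4 * \<alpha> ^ (q + 1))"

definition orth_BM_unital :: "nat \<Rightarrow> 'a::field ppoint set \<Rightarrow> bool" where
  "orth_BM_unital q U \<longleftrightarrow>
     (\<exists>\<sigma> \<alpha> \<beta>. collineation \<sigma> \<and> \<sigma> ` line_inf = line_inf \<and> BM_params_ok q \<alpha> \<beta>
              \<and> U = \<sigma> ` U_ab q \<alpha> \<beta>)"

text \<open>Non-degenerate conic: zero set of a ternary quadratic form
a x^2 + b y^2 + c z^2 + d xy + e xz + f yz whose symmetric (polar) matrix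
[[2a,d,e],[d,2b,f],[e,f,2c]] is nonsingular (odd characteristic).\<close>
definition nondeg_conic :: "'a::field ppoint set \<Rightarrow> bool" where
  "nondeg_conic C \<longleftrightarrow>
     (\<exists>a b c d e f.
        (2*a) * ((2*b) * (2*c) - f * f) - d * (d * (2*c) - f * e) + e * (d * f - (2*b) * e) \<noteq> 0
        \<and> C = {P \<in> points. \<forall>(x, y, z) \<in> P.
                 a * x^2 + b * y^2 + c * z^2 + d * x * y + e * x * z + f * y * z = 0})"

definition conic_BM_unital :: "nat \<Rightarrow> 'a::field ppoint set \<Rightarrow> bool" where
  "conic_BM_unital q U \<longleftrightarrow> orth_BM_unital q U \<and> (\<exists>C. nondeg_conic C \<and> C \<subseteq> U)"

definition tangent_lines :: "'a::field ppoint set \<Rightarrow> 'a ppoint set set" where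
  "tangent_lines U = {l \<in> lines. card (l \<inter> U) = 1}"

definition pedal :: "'a::field ppoint set \<Rightarrow> 'a ppoint \<Rightarrow> 'a ppoint set" where
  "pedal U Q = {P. \<exists>l \<in> tangent_lines U. Q \<in> l \<and> l \<inter> U = {P}}"

definition is_arc :: "'a::field ppoint set \<Rightarrow> bool" where
  "is_arc S \<longleftrightarrow> (\<forall>l \<in> lines. card (l \<inter> S) \<le> 2)"

end

(*
  A collineation fixing the line at infinity is induced by a semilinear map (fundamental theorem
  of affine geometry), so it maps non-degenerate conics to non-degenerate conics, tangents to
  tangents and arcs to arcs; it therefore suffices to treat U = U_ab and an affine point Q.

  Through an affine point (x, y) of U_ab the line of slope 2 alpha x + (beta - beta^q) x^q meets
  U_ab only once. A non-degenerate conic inside U_ab has no point on the line at infinity other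
  than (0:1:0) and must be tangent to these lines at each of its affine points; comparing the
  tangency conditions forces the conic to be a graph over the x-axis and beta to lie in GF(q).
  Then U_ab = {(x, y). y - alpha x^2 in GF(q)} and the tangent through Q = (x0, y0) touching U_ab
  at (x, y) has slope 2 alpha x, so all points of pedal(Q) lie on the parabola
  y = 2 alpha x^2 - 2 alpha x0 x + y0, which is an arc.
*)

theory Submission
  imports Defs "HOL-Algebra.Sylow" "HOL-Algebra.Multiplicative_Group"
    "HOL-Computational_Algebra.Polynomial"
begin

section \<open>Finite fields of order \<open>q\<^sup>2\<close>\<close>

lemma prime_CHAR_finite_field: "prime CHAR('a::{field, finite})"
  using prime_CHAR_semidom finite_imp_CHAR_pos[OF finite_UNIV] by blast

text \<open>An element of order \<open>r\<close> of the additive group, found in a Sylow \<open>r\<close>-subgroup, has order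
  dividing the characteristic.\<close>
lemma prime_dvd_card_UNIV_imp_eq_CHAR:
  assumes r: "prime r" and dvd: "r dvd card (UNIV :: 'a::{field, finite} set)"
  shows "r = CHAR('a)"
proof (rule ccontr)
  assume ne: "r \<noteq> CHAR('a)"
  define G where "G = \<lparr>carrier = UNIV :: 'a set, monoid.mult = (+), one = 0 :: 'a\<rparr>"
  have G: "group G"
  proof (rule groupI)
    show "\<exists>y\<in>carrier G. y \<otimes>\<^bsub>G\<^esub> x = \<one>\<^bsub>G\<^esub>" for x
      by (intro bexI[of _ "- x"]) (auto simp: G_def)
  qed (auto simp: G_def add_ac)
  obtain m where "Coset.order G = r ^ 1 * m"
    using dvd by (auto simp: G_def Coset.order_def)
  then obtain H where H: "subgroup H G" "card H = r"
    using sylow_thm[OF r G, of 1 m] by (auto simp: G_def)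
  have "\<not> H \<subseteq> {0}"
  proof
    assume "H \<subseteq> {0}"
    hence "card H \<le> 1"
      using card_mono[of "{0}" H] by simp
    thus False
      using H(2) prime_gt_1_nat[OF r] by simp
  qed
  then obtain h where h: "h \<in> H" "h \<noteq> 0"
    by blast
  interpret H: group "G\<lparr>carrier := H\<rparr>"
    using H(1) G by (simp add: group.subgroup_imp_group)
  have "pow (G\<lparr>carrier := H\<rparr>) h n = of_nat n * h" for n
    by (induction n) (auto simp: G_def distrib_right)
  hence "H.ord h dvd CHAR('a)"
    using H.pow_eq_id[of h "CHAR('a)"] h(1) by (simp add: G_def)
  moreover have "H.ord h dvd r"
    using H.ord_dvd_group_order[of h] h(1) H(2) by (simp add: Coset.order_def)
  ultimately have "H.ord h = 1"
    using r ne prime_CHAR_finite_field by (meson coprime_common_divisor_nat primes_coprime)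
  thus False
    using H.ord_eq_1[of h] h by (simp add: G_def)
qed

lemma dvd_card_UNIV_imp_CHAR_power:
  assumes "n dvd card (UNIV :: 'a::{field, finite} set)"
  shows "\<exists>k. n = CHAR('a) ^ k"
  using assms
proof (induction n rule: less_induct)
  case (less n)
  show ?case
  proof (cases "n = 1")
    case True
    thus ?thesis by (intro exI[of _ 0]) simp
  next
    case False
    have "n \<noteq> 0"
      using less.prems finite_UNIV_card_ge_0[where 'a='a] by auto
    then obtain r where r: "prime r" "r dvd n"
      using False prime_factor_nat by blast
    obtain n' where n': "n = r * n'"
      using r(2) by blast
    have "n' < n"
      using n' \<open>n \<noteq> 0\<close> prime_gt_1_nat[OF r(1)] by auto
    moreover have "n' dvd card (UNIV :: 'a set)"
      using less.prems n' by (metis dvd_mult_right)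
    ultimately obtain k where "n' = CHAR('a) ^ k"
      using less.IH by blast
    moreover have "r = CHAR('a)"
      using prime_dvd_card_UNIV_imp_eq_CHAR r less.prems dvd_trans by blast
    ultimately show ?thesis
      using n' by (intro exI[of _ "Suc k"]) simp
  qed
qed

lemma freshmans_dream_dvd_card_UNIV:
  assumes "q dvd card (UNIV :: 'a::{field, finite} set)"
  shows "(x + y :: 'a) ^ q = x ^ q + y ^ q"
proof -
  obtain k where "q = CHAR('a) ^ k"
    using dvd_card_UNIV_imp_CHAR_power[OF assms] by blast
  thus ?thesis
    using freshmans_dream' prime_CHAR_finite_field by blast
qed

lemma power_card_UNIV_eq_self: "(x :: 'a::{field, finite}) ^ card (UNIV :: 'a set) = x"
proof (cases "x = 0")
  case False
  define G where "G = \<lparr>carrier = UNIV - {0 :: 'a}, monoid.mult = (*), one = 1 :: 'a\<rparr>"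
  have G: "group G"
  proof (rule groupI)
    show "\<exists>y\<in>carrier G. y \<otimes>\<^bsub>G\<^esub> z = \<one>\<^bsub>G\<^esub>" if "z \<in> carrier G" for z
      using that by (intro bexI[of _ "inverse z"]) (auto simp: G_def)
  qed (auto simp: G_def mult_ac)
  have pow: "pow G x n = x ^ n" for n
    by (induction n) (auto simp: G_def mult.commute)
  have "Coset.order G = card (UNIV :: 'a set) - 1"
    by (simp add: G_def Coset.order_def card_Diff_singleton)
  moreover have "x [^]\<^bsub>G\<^esub> Coset.order G = \<one>\<^bsub>G\<^esub>"
    using group.pow_order_eq_1[OF G] False by (simp add: G_def)
  ultimately have "x [^]\<^bsub>G\<^esub> (card (UNIV :: 'a set) - 1) = 1"
    by (simp add: G_def)
  hence "x ^ (card (UNIV :: 'a set) - 1) = 1"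
    by (simp only: pow)
  moreover have "card (UNIV :: 'a set) = Suc (card (UNIV :: 'a set) - 1)"
    using finite_UNIV_card_ge_0[where 'a='a] by simp
  ultimately show ?thesis
    by (metis power_Suc mult_1_right)
qed (use finite_UNIV_card_ge_0[where 'a='a] in auto)

lemma card_quadratic_roots_le_2:
  fixes c2 c1 c0 :: "'a::idom"
  assumes "c2 \<noteq> 0"
  shows "card {x. c2 * x^2 + c1 * x + c0 = 0} \<le> 2"
proof -
  have "{x. c2 * x^2 + c1 * x + c0 = 0} = {x. poly [:c0, c1, c2:] x = 0}"
    by (auto simp: algebra_simps power2_eq_square)
  moreover have "[:c0, c1, c2:] \<noteq> 0" "degree [:c0, c1, c2:] = 2"
    using assms by auto
  ultimately show ?thesis
    using card_poly_roots_bound by metis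
qed

lemma card_subF_le:
  assumes "2 \<le> q"
  shows "card (subF q :: 'a::field set) \<le> q"
proof -
  have "subF q = {x :: 'a. poly (monom 1 q + [:0, -1:]) x = 0}"
    by (simp add: subF_def poly_monom)
  moreover have "degree (monom (1 :: 'a) q + [:0, -1:]) = q"
    using assms by (subst degree_add_eq_left) (auto simp: degree_monom_eq)
  moreover have "monom (1 :: 'a) q + [:0, -1:] \<noteq> 0"
    using calculation(2) assms by auto
  ultimately show ?thesis
    using card_poly_roots_bound by metis
qed

lemma card_UNIV_le_twice_card_squares:
  "card (UNIV :: 'a::{field, finite} set) + 1 \<le> 2 * card (range (\<lambda>w :: 'a. w^2))"
proof -
  let ?S = "range (\<lambda>w :: 'a. w^2)"
  have roots: "card {w. w^2 = s} \<le> 2" for s :: 'a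
    using card_quadratic_roots_le_2[of 1 0 "- s"] by simp
  have "UNIV \<subseteq> insert 0 (\<Union>s\<in>?S - {0}. {w. w^2 = s})"
    by auto
  hence "card (UNIV :: 'a set) \<le> card (insert 0 (\<Union>s\<in>?S - {0}. {w. w^2 = s}))"
    by (intro card_mono) auto
  also have "\<dots> \<le> Suc (card (\<Union>s\<in>?S - {0}. {w. w^2 = s}))"
    by (rule card_insert_le_m1) auto
  also have "card (\<Union>s\<in>?S - {0}. {w. w^2 = s}) \<le> (\<Sum>s\<in>?S - {0}. card {w. w^2 = s})"
    by (rule card_UN_le) auto
  also have "\<dots> \<le> (\<Sum>s\<in>?S - {0}. 2)"
    by (intro sum_mono roots)
  also have "\<dots> = 2 * card (?S - {0})"
    by simp
  also have "card (?S - {0}) = card ?S - 1"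
    by (subst card_Diff_singleton) auto
  finally have "card (UNIV :: 'a set) \<le> Suc (2 * (card ?S - 1))"
    by simp
  moreover have "card ?S \<ge> 1"
    by (simp add: Suc_leI card_gt_0_iff)
  ultimately show ?thesis
    by linarith
qed

text \<open>Both the squares and their images under \<open>z \<mapsto> D + A z\<close> fill more than half of the
  field, so the two sets meet.\<close>
lemma ex_square_eq_plus_times_square:
  fixes A D :: "'a::{field, finite}"
  assumes "A \<noteq> 0"
  shows "\<exists>w s. w^2 = D + A * s^2"
proof (rule ccontr)
  assume none: "\<not> ?thesis"
  let ?S = "range (\<lambda>w :: 'a. w^2)"
  let ?T = "(\<lambda>z. D + A * z) ` ?S"
  have "card ?T = card ?S"
    using assms by (intro card_image inj_onI) auto
  moreover have "card (?S \<union> ?T) = card ?S + card ?T"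
    using none by (intro card_Un_disjoint) auto
  moreover have "card (?S \<union> ?T) \<le> card (UNIV :: 'a set)"
    by (intro card_mono) auto
  ultimately show False
    using card_UNIV_le_twice_card_squares[where 'a='a] by linarith
qed

locale gf_q_squared =
  fixes q :: nat and field_type :: "'a::{field, finite} itself"
  assumes card_UNIV: "card (UNIV :: 'a set) = q^2"
    and odd_q: "odd q"
begin

lemma power_q_add: "((x::'a) + y) ^ q = x ^ q + y ^ q"
  by (rule freshmans_dream_dvd_card_UNIV) (simp add: card_UNIV)

lemma power_q_minus: "(- (x::'a)) ^ q = - (x ^ q)"
  using odd_q by (simp add: power_minus_odd)

lemma power_q_diff: "((x::'a) - y) ^ q = x ^ q - y ^ q"
  using power_q_add[of x "- y"] power_q_minus[of y] by simp

lemma power_q_power_q: "((x::'a) ^ q) ^ q = x"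
  using power_card_UNIV_eq_self[of x] by (simp add: card_UNIV power2_eq_square power_mult)

lemma q_ge_3: "3 \<le> q"
proof -
  have "2 \<le> card (UNIV :: 'a set)"
    using card_mono[of UNIV "{0 :: 'a, 1}"] by simp
  hence "1 ^ 2 < q ^ 2"
    using card_UNIV by simp
  hence "1 < q"
    by (rule power_less_imp_less_base) simp
  thus ?thesis
    using odd_q by presburger
qed

lemma two_neq_zero: "(2::'a) \<noteq> 0"
proof
  assume "(2::'a) = 0"
  hence "CHAR('a) dvd 2"
    using of_nat_eq_0_iff_char_dvd[of 2, where 'a='a] by simp
  hence "CHAR('a) = 2"
    using primes_dvd_imp_eq prime_CHAR_finite_field two_is_prime_nat by blast
  moreover obtain k where "q = CHAR('a) ^ k"
    using dvd_card_UNIV_imp_CHAR_power[of q, where 'a='a] card_UNIV by (auto simp: power2_eq_square)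
  ultimately show False
    using odd_q q_ge_3 by (cases k) auto
qed

lemma zero_in_subF: "(0::'a) \<in> subF q"
  using q_ge_3 by (simp add: subF_def)

lemma subF_add: "a \<in> subF q \<Longrightarrow> b \<in> subF q \<Longrightarrow> (a::'a) + b \<in> subF q"
  by (simp add: subF_def power_q_add)

lemma subF_diff: "a \<in> subF q \<Longrightarrow> b \<in> subF q \<Longrightarrow> (a::'a) - b \<in> subF q"
  by (simp add: subF_def power_q_diff)

lemma subF_mult: "a \<in> subF q \<Longrightarrow> b \<in> subF q \<Longrightarrow> (a::'a) * b \<in> subF q"
  by (simp add: subF_def power_mult_distrib)

lemma power_Suc_q_in_subF: "(x::'a) ^ (q + 1) \<in> subF q"
proof -
  have "(x ^ (q + 1)) ^ q = (x ^ q) ^ q * x ^ q"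
    by (simp add: power_mult_distrib flip: power_mult)
  thus ?thesis
    by (simp add: subF_def power_q_power_q mult.commute)
qed

lemma ex_not_in_subF: "\<exists>\<epsilon>::'a. \<epsilon> \<notin> subF q"
proof -
  have "q * 1 < q * q"
    using q_ge_3 by (intro mult_strict_left_mono) auto
  hence "card (subF q :: 'a set) < card (UNIV :: 'a set)"
    using card_subF_le[of q, where 'a='a] q_ge_3 card_UNIV unfolding power2_eq_square by linarith
  hence "subF q \<noteq> (UNIV :: 'a set)"
    by auto
  thus ?thesis
    by blast
qed

end

section \<open>Coordinates in the projective plane\<close>

lemma mem_pt_iff: "(u, v, w) \<in> pt x y z \<longleftrightarrow> (\<exists>c. c \<noteq> 0 \<and> u = c * x \<and> v = c * y \<and> w = c * z)"
  by (auto simp: pt_def)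

lemma self_in_pt: "(x, y, z) \<in> pt x y z"
  unfolding mem_pt_iff by (intro exI[of _ 1]) simp

lemma pt_smult:
  fixes c :: "'a::field"
  assumes "c \<noteq> 0"
  shows "pt (c * x) (c * y) (c * z) = pt x y z"
proof (intro equalityI subsetI)
  fix p assume "p \<in> pt x y z"
  then obtain d where "d \<noteq> 0" "p = (d * x, d * y, d * z)"
    by (auto simp: pt_def)
  thus "p \<in> pt (c * x) (c * y) (c * z)"
    using assms by (auto simp: pt_def intro!: exI[of _ "d / c"])
qed (use assms in \<open>auto simp: pt_def\<close>)

lemma pt_eq_pt_iff:
  assumes "(x, y, z) \<noteq> (0, 0, 0)"
  shows "pt x y z = pt x' y' z' \<longleftrightarrow> (\<exists>c. c \<noteq> 0 \<and> x' = c * x \<and> y' = c * y \<and> z' = c * z)"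
proof
  assume "pt x y z = pt x' y' z'"
  hence "(x', y', z') \<in> pt x y z"
    using self_in_pt by metis
  thus "\<exists>c. c \<noteq> 0 \<and> x' = c * x \<and> y' = c * y \<and> z' = c * z"
    by (simp add: mem_pt_iff)
next
  assume "\<exists>c. c \<noteq> 0 \<and> x' = c * x \<and> y' = c * y \<and> z' = c * z"
  thus "pt x y z = pt x' y' z'"
    using pt_smult by metis
qed

lemma pt_in_points: "(x, y, z) \<noteq> (0, 0, 0) \<Longrightarrow> pt x y z \<in> points"
  by (auto simp: points_def)

lemma points_obtain_coords:
  assumes "P \<in> points"
  obtains x y z where "P = pt x y z" "(x, y, z) \<noteq> (0, 0, 0)"
  using assms by (auto simp: points_def)

lemma subset_points_eqI:
  assumes "A \<subseteq> points" "B \<subseteq> points"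
    and "\<And>x y z. (x, y, z) \<noteq> (0, 0, 0) \<Longrightarrow> pt x y z \<in> A \<longleftrightarrow> pt x y z \<in> B"
  shows "A = B"
proof (intro equalityI subsetI)
  show "P \<in> B" if "P \<in> A" for P
    using that assms by (metis points_obtain_coords subsetD)
  show "P \<in> A" if "P \<in> B" for P
    using that assms by (metis points_obtain_coords subsetD)
qed

lemma pline_subset_points: "pline a b c \<subseteq> points"
  by (auto simp: pline_def)

lemma lines_subset_points: "l \<in> lines \<Longrightarrow> l \<subseteq> points"
  using pline_subset_points by (auto simp: lines_def)

lemma pline_in_lines: "(a, b, c) \<noteq> (0, 0, 0) \<Longrightarrow> pline a b c \<in> lines"
  by (auto simp: lines_def)

lemma pt_in_pline_iff:
  assumes "(x, y, z) \<noteq> (0, 0, 0)"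
  shows "pt x y z \<in> pline a b c \<longleftrightarrow> a * x + b * y + c * z = 0"
proof
  show "pt x y z \<in> pline a b c \<Longrightarrow> a * x + b * y + c * z = 0"
    using self_in_pt[of x y z] by (auto simp: pline_def)
next
  assume "a * x + b * y + c * z = 0"
  moreover have "a * (d * x) + b * (d * y) + c * (d * z) = d * (a * x + b * y + c * z)" for d
    by (simp add: algebra_simps)
  ultimately show "pt x y z \<in> pline a b c"
    using pt_in_points[OF assms] by (auto simp: pline_def pt_def)
qed

lemma pline_smult:
  fixes k :: "'a::field"
  assumes "k \<noteq> 0"
  shows "pline (k * a) (k * b) (k * c) = pline a b c"
proof -
  have "(k * a) * x + (k * b) * y + (k * c) * z = k * (a * x + b * y + c * z)" for x y z
    by (simp add: algebra_simps)
  thus ?thesis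
    using assms by (auto simp: pline_def)
qed

lemma ex_proportional_if_cross_eq_0:
  fixes x1 y1 z1 x2 y2 z2 :: "'a::field"
  assumes "(x1, y1, z1) \<noteq> (0, 0, 0)"
    and "y1 * z2 - z1 * y2 = 0" "z1 * x2 - x1 * z2 = 0" "x1 * y2 - y1 * x2 = 0"
  shows "\<exists>c. x2 = c * x1 \<and> y2 = c * y1 \<and> z2 = c * z1"
proof (cases "x1 = 0")
  case False
  have "y2 = x2 / x1 * y1" "z2 = x2 / x1 * z1"
    using False assms(3, 4) by (simp_all add: field_simps)
  thus ?thesis
    using False by (intro exI[of _ "x2 / x1"]) simp
next
  case x1: True
  show ?thesis
  proof (cases "y1 = 0")
    case False
    have "x2 = y2 / y1 * x1" "z2 = y2 / y1 * z1"
      using False x1 assms(2, 4) by (simp_all add: field_simps)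
    thus ?thesis
      using False by (intro exI[of _ "y2 / y1"]) simp
  next
    case True
    hence "z1 \<noteq> 0"
      using assms(1) x1 by auto
    hence "x2 = z2 / z1 * x1" "y2 = z2 / z1 * y1"
      using True x1 assms(2, 3) by (simp_all add: field_simps)
    thus ?thesis
      using \<open>z1 \<noteq> 0\<close> by (intro exI[of _ "z2 / z1"]) simp
  qed
qed

lemma cross_neq_0_if_pt_neq:
  assumes P: "(x1, y1, z1) \<noteq> (0, 0, 0)" and R: "(x2, y2, z2) \<noteq> (0, 0, 0)"
    and PR: "pt x1 y1 z1 \<noteq> pt x2 y2 z2"
  shows "(y1 * z2 - z1 * y2, z1 * x2 - x1 * z2, x1 * y2 - y1 * x2) \<noteq> (0, 0, 0)"
proof
  assume "(y1 * z2 - z1 * y2, z1 * x2 - x1 * z2, x1 * y2 - y1 * x2) = (0, 0, 0)"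
  hence "\<exists>d. x2 = d * x1 \<and> y2 = d * y1 \<and> z2 = d * z1"
    by (intro ex_proportional_if_cross_eq_0[OF P]) auto
  then obtain d where d: "x2 = d * x1" "y2 = d * y1" "z2 = d * z1"
    by blast
  hence "d \<noteq> 0"
    using R by auto
  thus False
    using PR d pt_smult by metis
qed

lemma line_eq_pline_cross:
  assumes l: "l \<in> lines" "pt x1 y1 z1 \<in> l" "pt x2 y2 z2 \<in> l"
    and P: "(x1, y1, z1) \<noteq> (0, 0, 0)" and R: "(x2, y2, z2) \<noteq> (0, 0, 0)"
    and cross: "(y1 * z2 - z1 * y2, z1 * x2 - x1 * z2, x1 * y2 - y1 * x2) \<noteq> (0, 0, 0)"
  shows "l = pline (y1 * z2 - z1 * y2) (z1 * x2 - x1 * z2) (x1 * y2 - y1 * x2)"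
proof -
  obtain a b c where l': "l = pline a b c" "(a, b, c) \<noteq> (0, 0, 0)"
    using l(1) by (auto simp: lines_def)
  have e1: "a * x1 + b * y1 + c * z1 = 0" and e2: "a * x2 + b * y2 + c * z2 = 0"
    using l(2, 3) P R l'(1) by (simp_all add: pt_in_pline_iff)
  have "b * (x1 * y2 - y1 * x2) - c * (z1 * x2 - x1 * z2) = x1 * (a * x2 + b * y2 + c * z2) - x2 * (a * x1 + b * y1 + c * z1)"
    "c * (y1 * z2 - z1 * y2) - a * (x1 * y2 - y1 * x2) = y1 * (a * x2 + b * y2 + c * z2) - y2 * (a * x1 + b * y1 + c * z1)"
    "a * (z1 * x2 - x1 * z2) - b * (y1 * z2 - z1 * y2) = z1 * (a * x2 + b * y2 + c * z2) - z2 * (a * x1 + b * y1 + c * z1)"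
    by (simp_all add: algebra_simps)
  hence "b * (x1 * y2 - y1 * x2) - c * (z1 * x2 - x1 * z2) = 0"
    "c * (y1 * z2 - z1 * y2) - a * (x1 * y2 - y1 * x2) = 0"
    "a * (z1 * x2 - x1 * z2) - b * (y1 * z2 - z1 * y2) = 0"
    unfolding e1 e2 by simp_all
  hence "\<exists>k. y1 * z2 - z1 * y2 = k * a \<and> z1 * x2 - x1 * z2 = k * b \<and> x1 * y2 - y1 * x2 = k * c"
    by (rule ex_proportional_if_cross_eq_0[OF l'(2)])
  then obtain k where k: "y1 * z2 - z1 * y2 = k * a" "z1 * x2 - x1 * z2 = k * b" "x1 * y2 - y1 * x2 = k * c"
    by blast
  hence "k \<noteq> 0"
    using cross by auto
  thus ?thesis
    using pline_smult[of k a b c] unfolding k l'(1) by simp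
qed

lemma line_through_two_points:
  assumes "P \<in> points" "R \<in> points" "P \<noteq> R"
  obtains l where "l \<in> lines" "P \<in> l" "R \<in> l" "\<And>l'. l' \<in> lines \<Longrightarrow> P \<in> l' \<Longrightarrow> R \<in> l' \<Longrightarrow> l' = l"
proof -
  obtain x1 y1 z1 where P: "P = pt x1 y1 z1" "(x1, y1, z1) \<noteq> (0, 0, 0)"
    using assms(1) by (rule points_obtain_coords)
  obtain x2 y2 z2 where R: "R = pt x2 y2 z2" "(x2, y2, z2) \<noteq> (0, 0, 0)"
    using assms(2) by (rule points_obtain_coords)
  let ?l = "pline (y1 * z2 - z1 * y2) (z1 * x2 - x1 * z2) (x1 * y2 - y1 * x2)"
  have cross: "(y1 * z2 - z1 * y2, z1 * x2 - x1 * z2, x1 * y2 - y1 * x2) \<noteq> (0, 0, 0)"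
    using cross_neq_0_if_pt_neq[OF P(2) R(2)] P(1) R(1) assms(3) by simp
  show ?thesis
  proof (rule that)
    show "?l \<in> lines"
      using cross by (rule pline_in_lines)
    show "P \<in> ?l" "R \<in> ?l"
      unfolding P R using P(2) R(2) by (simp_all add: pt_in_pline_iff algebra_simps)
    show "l' = ?l" if "l' \<in> lines" "P \<in> l'" "R \<in> l'" for l'
      by (rule line_eq_pline_cross[OF that(1) _ _ P(2) R(2) cross]) (use that(2, 3) P(1) R(1) in simp_all)
  qed
qed

lemma lines_eq_if_two_common_points:
  assumes "l1 \<in> lines" "l2 \<in> lines" "P \<noteq> R" "P \<in> l1" "R \<in> l1" "P \<in> l2" "R \<in> l2"
  shows "l1 = l2"
proof -
  have "P \<in> points" "R \<in> points"
    using assms(1, 4, 5) lines_subset_points by blast+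
  then obtain l where "\<And>l'. l' \<in> lines \<Longrightarrow> P \<in> l' \<Longrightarrow> R \<in> l' \<Longrightarrow> l' = l"
    using line_through_two_points assms(3) by metis
  thus ?thesis
    using assms by metis
qed

abbreviation Aff :: "'a::field \<Rightarrow> 'a \<Rightarrow> 'a ppoint" where "Aff x y \<equiv> pt x y 1"
abbreviation Dir :: "'a::field \<Rightarrow> 'a ppoint" where "Dir m \<equiv> pt 1 m 0"
abbreviation Pinf :: "'a::field ppoint" where "Pinf \<equiv> pt 0 1 0"

lemma Aff_eq_Aff_iff [simp]: "Aff x y = Aff x' y' \<longleftrightarrow> x = x' \<and> y = y'"
  by (subst pt_eq_pt_iff) auto

lemma Aff_neq_Dir [simp]: "Aff x y \<noteq> Dir m" "Dir m \<noteq> Aff x y"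
  by (subst pt_eq_pt_iff; auto)+

lemma Aff_neq_Pinf [simp]: "Aff x y \<noteq> Pinf" "Pinf \<noteq> Aff x y"
  by (subst pt_eq_pt_iff; auto)+

lemma Dir_neq_Pinf [simp]: "Dir m \<noteq> Pinf" "Pinf \<noteq> Dir m"
  by (subst pt_eq_pt_iff; auto)+

lemma Aff_in_points [simp]: "Aff x y \<in> points"
  and Dir_in_points [simp]: "Dir m \<in> points"
  and Pinf_in_points [simp]: "Pinf \<in> points"
  by (auto intro: pt_in_points)

lemma Aff_in_pline_iff [simp]: "Aff x y \<in> pline a b c \<longleftrightarrow> a * x + b * y + c = 0"
  by (subst pt_in_pline_iff) auto

lemma Dir_in_pline_iff [simp]: "Dir m \<in> pline a b c \<longleftrightarrow> a + b * m = 0"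
  by (subst pt_in_pline_iff) auto

lemma Pinf_in_pline_iff [simp]: "Pinf \<in> pline a b c \<longleftrightarrow> b = 0"
  by (subst pt_in_pline_iff) auto

lemma Aff_notin_line_inf [simp]: "Aff x y \<notin> line_inf"
  and Dir_in_line_inf [simp]: "Dir m \<in> line_inf"
  and Pinf_in_line_inf [simp]: "Pinf \<in> line_inf"
  by (auto simp: line_inf_def)

lemma line_inf_in_lines: "line_inf \<in> lines"
  unfolding line_inf_def by (rule pline_in_lines) simp

lemma points_cases:
  assumes "P \<in> points"
  obtains x y where "P = Aff x y" | m where "P = Dir m" | "P = Pinf"
proof -
  obtain x y z where P: "P = pt x y z" "(x, y, z) \<noteq> (0, 0, 0)"
    using assms by (rule points_obtain_coords)
  consider "z \<noteq> 0" | "z = 0" "x \<noteq> 0" | "z = 0" "x = 0" "y \<noteq> 0"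
    using P(2) by auto
  thus thesis
  proof cases
    case 1
    hence "pt x y z = Aff (x / z) (y / z)"
      using P(2) by (subst pt_eq_pt_iff) (auto intro!: exI[of _ "1 / z"])
    thus thesis using that(1) P(1) by blast
  next
    case 2
    hence "pt x y z = Dir (y / x)"
      using P(2) by (subst pt_eq_pt_iff) (auto intro!: exI[of _ "1 / x"])
    thus thesis using that(2) P(1) by blast
  next
    case 3
    hence "pt x y z = Pinf"
      using P(2) by (subst pt_eq_pt_iff) (auto intro!: exI[of _ "1 / y"])
    thus thesis using that(3) P(1) by blast
  qed
qed

lemma affine_point_cases:
  assumes "P \<in> points" "P \<notin> line_inf"
  obtains x y where "P = Aff x y"
  using assms by (cases rule: points_cases) auto

lemma lines_cases:
  assumes "l \<in> lines"
  obtains "l = line_inf" | k where "l = pline 1 0 (- k)" | m k where "l = pline m (- 1) k"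
proof -
  obtain a b c where l: "l = pline a b c" "(a, b, c) \<noteq> (0, 0, 0)"
    using assms by (auto simp: lines_def)
  consider "b \<noteq> 0" | "b = 0" "a \<noteq> 0" | "b = 0" "a = 0" "c \<noteq> 0"
    using l(2) by auto
  thus thesis
  proof cases
    case 1
    hence "l = pline (- a / b) (- 1) (- c / b)"
      using l(1) pline_smult[of "- 1 / b" a b c] by simp
    thus thesis using that(3) by blast
  next
    case 2
    hence "l = pline 1 0 (- (- c / a))"
      using l(1) pline_smult[of "1 / a" a b c] by simp
    thus thesis using that(2) by blast
  next
    case 3
    hence "l = line_inf"
      using l(1) pline_smult[of "1 / c" a b c] by (simp add: line_inf_def)
    thus thesis using that(1) by blast
  qed
qed

section \<open>Collineations, arcs and pedals\<close>

lemma line_obtain_two_points: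
  assumes "l \<in> lines"
  obtains P R where "P \<in> l" "R \<in> l" "P \<noteq> R"
proof (cases rule: lines_cases[OF assms])
  case 1
  thus thesis
    using that[of "Dir 0" Pinf] by (simp add: line_inf_def)
next
  case (2 k)
  thus thesis
    using that[of "Aff k 0" Pinf] by simp
next
  case (3 m k)
  thus thesis
    using that[of "Aff 0 k" "Dir m"] by simp
qed

lemma collineation_inj_on: "collineation \<sigma> \<Longrightarrow> inj_on \<sigma> points"
  by (auto simp: collineation_def bij_betw_def)

lemma collineation_image_in_lines: "collineation \<sigma> \<Longrightarrow> l \<in> lines \<Longrightarrow> \<sigma> ` l \<in> lines"
  by (simp add: collineation_def)

lemma collineation_line_preimage:
  assumes \<sigma>: "collineation \<sigma>" and l': "l' \<in> lines"
  obtains l where "l \<in> lines" "\<sigma> ` l = l'"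
proof -
  obtain P R where PR: "P \<in> l'" "R \<in> l'" "P \<noteq> R"
    using l' by (rule line_obtain_two_points)
  have "P \<in> \<sigma> ` points" "R \<in> \<sigma> ` points"
    using PR l' lines_subset_points \<sigma> by (auto simp: collineation_def bij_betw_def)
  then obtain P0 R0 where P0: "P0 \<in> points" "\<sigma> P0 = P" and R0: "R0 \<in> points" "\<sigma> R0 = R"
    by blast
  obtain l where l: "l \<in> lines" "P0 \<in> l" "R0 \<in> l"
    using line_through_two_points[of P0 R0] P0 R0 PR(3) by metis
  have "\<sigma> ` l = l'"
    using lines_eq_if_two_common_points[OF collineation_image_in_lines[OF \<sigma> l(1)] l' PR(3)]
      l P0 R0 PR by blast
  thus thesis
    using that l(1) by blast
qed

lemma collineation_image_Int:
  "collineation \<sigma> \<Longrightarrow> A \<subseteq> points \<Longrightarrow> B \<subseteq> points \<Longrightarrow> \<sigma> ` (A \<inter> B) = \<sigma> ` A \<inter> \<sigma> ` B"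
  by (rule inj_on_image_Int[OF collineation_inj_on])

lemma is_arc_subset: "is_arc S \<Longrightarrow> T \<subseteq> S \<Longrightarrow> is_arc (T :: 'a::{field, finite} ppoint set)"
  unfolding is_arc_def by (meson Int_mono card_mono finite order_refl order_trans)

lemma is_arc_image:
  fixes S :: "'a::{field, finite} ppoint set"
  assumes \<sigma>: "collineation \<sigma>" and S: "S \<subseteq> points" "is_arc S"
  shows "is_arc (\<sigma> ` S)"
  unfolding is_arc_def
proof
  fix l :: "'a ppoint set"
  assume "l \<in> lines"
  with \<sigma> obtain l0 where l0: "l0 \<in> lines" "\<sigma> ` l0 = l"
    by (rule collineation_line_preimage)
  have "l \<inter> \<sigma> ` S = \<sigma> ` (l0 \<inter> S)"
    using collineation_image_Int[OF \<sigma> lines_subset_points[OF l0(1)] S(1)] l0(2) by simp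
  hence "card (l \<inter> \<sigma> ` S) \<le> card (l0 \<inter> S)"
    by (simp add: card_image_le)
  also have "\<dots> \<le> 2"
    using S(2) l0(1) by (simp add: is_arc_def)
  finally show "card (l \<inter> \<sigma> ` S) \<le> 2" .
qed

lemma pedal_image_subset:
  fixes U :: "'a::{field, finite} ppoint set"
  assumes \<sigma>: "collineation \<sigma>" and U: "U \<subseteq> points" and Q: "Q \<in> points"
  shows "pedal (\<sigma> ` U) (\<sigma> Q) \<subseteq> \<sigma> ` pedal U Q"
proof
  fix P
  assume "P \<in> pedal (\<sigma> ` U) (\<sigma> Q)"
  then obtain l where l: "l \<in> lines" "\<sigma> Q \<in> l" "l \<inter> \<sigma> ` U = {P}"
    by (auto simp: pedal_def tangent_lines_def)
  obtain l0 where l0: "l0 \<in> lines" "\<sigma> ` l0 = l"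
    using \<sigma> l(1) by (rule collineation_line_preimage)
  have inj: "inj_on \<sigma> points"
    using \<sigma> by (rule collineation_inj_on)
  have "\<sigma> ` (l0 \<inter> U) = {P}"
    using collineation_image_Int[OF \<sigma> lines_subset_points[OF l0(1)] U] l0(2) l(3) by simp
  then obtain P0 where P0: "P0 \<in> l0 \<inter> U" "\<sigma> P0 = P"
    by (metis imageE insertI1)
  have "l0 \<inter> U = {P0}"
  proof (intro equalityI subsetI)
    fix P1
    assume "P1 \<in> l0 \<inter> U"
    hence "\<sigma> P1 = \<sigma> P0"
      using \<open>\<sigma> ` (l0 \<inter> U) = {P}\<close> P0(2) by blast
    thus "P1 \<in> {P0}"
      using inj \<open>P1 \<in> l0 \<inter> U\<close> P0(1) U by (auto dest: inj_onD)
  qed (use P0(1) in blast)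
  have "Q \<in> l0"
    using l(2) l0 inj Q lines_subset_points[OF l0(1)] by (auto dest: inj_onD)
  hence "P0 \<in> pedal U Q"
    using l0(1) \<open>l0 \<inter> U = {P0}\<close> by (auto simp: pedal_def tangent_lines_def)
  thus "P \<in> \<sigma> ` pedal U Q"
    using P0(2) by blast
qed

section \<open>Collineations fixing the line at infinity are semilinear\<close>

definition affine_line :: "'a::field \<Rightarrow> 'a \<Rightarrow> 'a \<Rightarrow> ('a \<times> 'a) set" where
  "affine_line a b c = {(x, y). a * x + b * y + c = 0}"

definition is_affine_line :: "('a::field \<times> 'a) set \<Rightarrow> bool" where
  "is_affine_line L \<longleftrightarrow> (\<exists>a b c. (a, b) \<noteq> (0, 0) \<and> L = affine_line a b c)"

lemma mem_affine_line [simp]: "(x, y) \<in> affine_line a b c \<longleftrightarrow> a * x + b * y + c = 0"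
  by (simp add: affine_line_def)

lemma is_affine_lineI: "(a, b) \<noteq> (0, 0) \<Longrightarrow> is_affine_line (affine_line a b c)"
  by (auto simp: is_affine_line_def)

lemma affine_line_eq_pline: "affine_line a b c = {(x, y). Aff x y \<in> pline a b c}"
  by (auto simp: affine_line_def)

lemma affine_lines_eq_if_two_common_points:
  assumes "is_affine_line L1" "is_affine_line L2" "P \<noteq> R" "P \<in> L1" "R \<in> L1" "P \<in> L2" "R \<in> L2"
  shows "L1 = L2"
proof -
  obtain a b c where 1: "(a, b) \<noteq> (0, 0)" "L1 = affine_line a b c"
    using assms(1) by (auto simp: is_affine_line_def)
  obtain a' b' c' where 2: "(a', b') \<noteq> (0, 0)" "L2 = affine_line a' b' c'"
    using assms(2) by (auto simp: is_affine_line_def)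
  obtain p1 p2 r1 r2 where PR: "P = (p1, p2)" "R = (r1, r2)"
    by (cases P, cases R)
  have "pline a b c = pline a' b' c'"
    by (rule lines_eq_if_two_common_points[of _ _ "Aff p1 p2" "Aff r1 r2"])
      (use 1 2 assms PR in \<open>auto intro!: pline_in_lines\<close>)
  thus ?thesis
    using 1 2 by (simp add: affine_line_eq_pline)
qed

lemma affine_line_smult: "k \<noteq> 0 \<Longrightarrow> affine_line (k * a) (k * b) (k * c) = affine_line a b c"
  by (simp add: affine_line_eq_pline pline_smult)

lemma ex_proportional_if_det_eq_0:
  fixes a b a' b' :: "'a::field"
  assumes "(a, b) \<noteq> (0, 0)" "a * b' = a' * b"
  shows "\<exists>k. a' = k * a \<and> b' = k * b"
proof (cases "a = 0")
  case True
  hence "b \<noteq> 0"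
    using assms by auto
  thus ?thesis
    using assms True by (intro exI[of _ "b' / b"]) (auto simp: field_simps)
next
  case False
  thus ?thesis
    using assms by (intro exI[of _ "a' / a"]) (auto simp: field_simps)
qed

lemma disjoint_affine_lines_parallel:
  fixes a b c a' b' c' :: "'a::field"
  assumes "affine_line a b c \<inter> affine_line a' b' c' = {}"
  shows "a * b' = a' * b"
proof (rule ccontr)
  assume "a * b' \<noteq> a' * b"
  define D where "D = a * b' - a' * b"
  have D: "D \<noteq> 0"
    using \<open>a * b' \<noteq> a' * b\<close> by (simp add: D_def)
  define x where "x = (b * c' - b' * c) / D"
  define y where "y = (a' * c - a * c') / D"
  have "a * x + b * y + c = (a * (b * c' - b' * c) + b * (a' * c - a * c') + c * D) / D"
    "a' * x + b' * y + c' = (a' * (b * c' - b' * c) + b' * (a' * c - a * c') + c' * D) / D"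
    using D by (simp_all add: x_def y_def add_divide_distrib)
  moreover have "a * (b * c' - b' * c) + b * (a' * c - a * c') + c * D = 0"
    "a' * (b * c' - b' * c) + b' * (a' * c - a * c') + c' * D = 0"
    by (simp_all add: D_def algebra_simps)
  ultimately have "(x, y) \<in> affine_line a b c \<inter> affine_line a' b' c'"
    by simp
  thus False
    using assms by blast
qed

lemma parallel_affine_line_through:
  fixes a b c :: "'a::field"
  assumes L: "is_affine_line L" and ab: "(a, b) \<noteq> (0, 0)"
    and parallel: "L \<inter> affine_line a b c = {} \<or> L = affine_line a b c" and uv: "(u, v) \<in> L"
  shows "L = affine_line a b (- (a * u + b * v))"
proof -
  obtain a' b' c' where L': "(a', b') \<noteq> (0, 0)" "L = affine_line a' b' c'"
    using L by (auto simp: is_affine_line_def)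
  show ?thesis
  proof (cases "L = affine_line a b c")
    case True
    hence "a * u + b * v + c = 0"
      using uv by simp
    hence "c = - (a * u + b * v)"
      by (metis add.commute eq_neg_iff_add_eq_0)
    thus ?thesis
      using True by simp
  next
    case False
    hence "a' * b = a * b'"
      using parallel L' disjoint_affine_lines_parallel by (metis inf_commute)
    then obtain k where k: "a' = k * a" "b' = k * b"
      using ex_proportional_if_det_eq_0[OF ab] by (metis mult.commute)
    have "k \<noteq> 0"
      using L' k by auto
    have "a' * u + b' * v + c' = 0"
      using uv L' by simp
    hence "c' = - (a' * u + b' * v)"
      by (metis add.commute eq_neg_iff_add_eq_0)
    hence "c' = k * (- (a * u + b * v))"
      using k by (simp add: algebra_simps)
    thus ?thesis
      using L' k affine_line_smult[OF \<open>k \<noteq> 0\<close>] by simp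
  qed
qed

locale field_automorphism =
  fixes \<tau> :: "'a::field \<Rightarrow> 'a"
  assumes bij: "bij \<tau>"
    and add: "\<tau> (x + y) = \<tau> x + \<tau> y"
    and mult: "\<tau> (x * y) = \<tau> x * \<tau> y"
    and one: "\<tau> 1 = 1"
begin

lemma zero: "\<tau> 0 = 0"
  using add[of 0 0] by (simp only: add_0 add_cancel_right_right)

lemma eq_0_iff: "\<tau> x = 0 \<longleftrightarrow> x = 0"
  using bij zero by (metis bij_def inj_eq)

lemma minus: "\<tau> (- x) = - \<tau> x"
proof -
  have "\<tau> x + \<tau> (- x) = 0"
    using add[of x "- x"] zero by simp
  thus ?thesis
    by (metis minus_unique)
qed

lemma diff: "\<tau> (x - y) = \<tau> x - \<tau> y"
  using add[of x "- y"] minus[of y] by simp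

lemma power: "\<tau> (x ^ n) = \<tau> x ^ n"
  by (induction n) (simp_all add: one mult)

lemma numeral: "\<tau> (numeral n) = numeral n"
proof (induction n)
  case (Bit0 n)
  thus ?case
    using add[of "numeral n" "numeral n"] by (simp add: numeral_Bit0)
next
  case (Bit1 n)
  thus ?case
    using add[of "numeral n" "numeral n"] add[of "numeral n + numeral n" 1] one
    by (simp add: numeral_Bit1)
qed (simp add: one)

lemma apply_inv: "\<tau> (inv_into UNIV \<tau> y) = y"
  using bij by (simp add: bij_is_surj surj_f_inv_f)

end

locale affine_collineation =
  fixes G :: "'a::{field, finite} \<times> 'a \<Rightarrow> 'a \<times> 'a"
  assumes bij_G: "bij G" and G_lines: "\<And>L. is_affine_line L \<Longrightarrow> is_affine_line (G ` L)"
begin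

lemma inj_G: "inj G"
  using bij_G bij_is_inj by blast

lemma image_affine_line_eq:
  assumes "is_affine_line L" "is_affine_line L'" "P \<noteq> R" "P \<in> L" "R \<in> L" "G P \<in> L'" "G R \<in> L'"
  shows "G ` L = L'"
  by (rule affine_lines_eq_if_two_common_points[of _ _ "G P" "G R"])
    (use assms G_lines inj_G in \<open>auto simp: inj_eq\<close>)

lemma image_parallel_affine_line:
  assumes L: "is_affine_line L" and ab: "(a, b) \<noteq> (0, 0)"
    and par: "L \<inter> affine_line a b c = {} \<or> L = affine_line a b c"
    and img: "G ` affine_line a b c = affine_line a' b' c'" and ab': "(a', b') \<noteq> (0, 0)"
    and P: "P \<in> L" and GP: "G P = (u, v)"
  shows "G ` L = affine_line a' b' (- (a' * u + b' * v))"
proof -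
  have "G ` L \<inter> G ` affine_line a b c = {} \<or> G ` L = G ` affine_line a b c"
    using par inj_G by (metis image_Int image_empty)
  hence "G ` L \<inter> affine_line a' b' c' = {} \<or> G ` L = affine_line a' b' c'"
    using img by simp
  moreover have "(u, v) \<in> G ` L"
    using P GP by (metis imageI)
  ultimately show ?thesis
    using parallel_affine_line_through[OF G_lines[OF L] ab'] by blast
qed

end

locale affine_collineation_fixing_frame = affine_collineation +
  assumes G_0_0: "G (0, 0) = (0, 0)" and G_1_0: "G (1, 0) = (1, 0)" and G_0_1: "G (0, 1) = (0, 1)"
begin

definition \<tau> :: "'a \<Rightarrow> 'a" where "\<tau> x = fst (G (x, 0))"
definition \<tau>' :: "'a \<Rightarrow> 'a" where "\<tau>' y = snd (G (0, y))"

lemma image_x_axis: "G ` affine_line 0 1 0 = affine_line 0 1 0"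
  by (rule image_affine_line_eq[of _ _ "(0, 0)" "(1, 0)"]) (auto intro: is_affine_lineI simp: G_0_0 G_1_0)

lemma image_y_axis: "G ` affine_line 1 0 0 = affine_line 1 0 0"
  by (rule image_affine_line_eq[of _ _ "(0, 0)" "(0, 1)"]) (auto intro: is_affine_lineI simp: G_0_0 G_0_1)

lemma G_x_axis: "G (x, 0) = (\<tau> x, 0)"
proof -
  have "G (x, 0) \<in> affine_line 0 1 0"
    using image_x_axis by (metis mem_affine_line imageI mult_zero_left add_0 mult_zero_right)
  thus ?thesis
    by (cases "G (x, 0)") (simp add: \<tau>_def)
qed

lemma G_y_axis: "G (0, y) = (0, \<tau>' y)"
proof -
  have "G (0, y) \<in> affine_line 1 0 0"
    using image_y_axis by (metis mem_affine_line imageI mult_zero_left add_0 mult_zero_right)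
  thus ?thesis
    by (cases "G (0, y)") (simp add: \<tau>'_def)
qed

lemma tau_0: "\<tau> 0 = 0"
  using G_0_0 G_x_axis[of 0] by simp

lemma tau_1: "\<tau> 1 = 1"
  using G_1_0 G_x_axis[of 1] by simp

lemma image_vertical_line: "G ` affine_line 1 0 (- k) = affine_line 1 0 (- (\<tau> k))"
proof -
  have "affine_line 1 0 (- k) \<inter> affine_line 1 0 0 = {} \<or> affine_line 1 0 (- k) = affine_line (1::'a) 0 0"
    by (cases "k = 0") auto
  from image_parallel_affine_line[OF is_affine_lineI _ this image_y_axis _ _ G_x_axis[of k]] show ?thesis by simp
qed

lemma image_horizontal_line: "G ` affine_line 0 1 (- k) = affine_line 0 1 (- (\<tau>' k))"
proof -
  have "affine_line 0 1 (- k) \<inter> affine_line 0 1 0 = {} \<or> affine_line 0 1 (- k) = affine_line (0::'a) 1 0"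
    by (cases "k = 0") auto
  from image_parallel_affine_line[OF is_affine_lineI _ this image_x_axis _ _ G_y_axis[of k]] show ?thesis by simp
qed

lemma G_eq_tau_tau': "G (x, y) = (\<tau> x, \<tau>' y)"
proof -
  have "G (x, y) \<in> G ` affine_line 1 0 (- x)" "G (x, y) \<in> G ` affine_line 0 1 (- y)" by auto
  hence "G (x, y) \<in> affine_line 1 0 (- (\<tau> x))" "G (x, y) \<in> affine_line 0 1 (- (\<tau>' y))"
    using image_vertical_line image_horizontal_line by auto
  thus ?thesis by (cases "G (x, y)") simp
qed

lemma image_antidiagonal: "G ` affine_line 1 1 (- 1) = affine_line 1 1 (- 1)"
  by (rule image_affine_line_eq[of _ _ "(1, 0)" "(0, 1)"]) (auto intro: is_affine_lineI simp: G_1_0 G_0_1)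

lemma tau'_eq_tau: "\<tau>' x = \<tau> x"
proof -
  have "affine_line 1 1 (- x) \<inter> affine_line 1 1 (- 1) = {} \<or> affine_line 1 1 (- x) = affine_line (1::'a) 1 (- 1)"
    by (cases "x = 1") auto
  from image_parallel_affine_line[OF is_affine_lineI _ this image_antidiagonal _ _ G_x_axis[of x]]
  have "G ` affine_line 1 1 (- x) = affine_line 1 1 (- (\<tau> x))" by simp
  moreover have "G (0, x) \<in> G ` affine_line 1 1 (- x)" by auto
  ultimately show ?thesis using G_y_axis by simp
qed

lemma G_eq: "G (x, y) = (\<tau> x, \<tau> y)"
  using G_eq_tau_tau' tau'_eq_tau by simp

text \<open>The point \<open>(x + y, 0)\<close>, resp. \<open>(x y, 0)\<close>, is where the parallel through \<open>(x, 1)\<close>,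
  resp. \<open>(0, y)\<close>, to the line joining \<open>(0, 1)\<close> and \<open>(y, 0)\<close>, resp. \<open>(x, 0)\<close>, meets the
  \<open>x\<close>-axis; \<open>G\<close> preserves this construction.\<close>
lemma tau_add: "\<tau> (x + y) = \<tau> x + \<tau> y"
proof (cases "y = 0")
  case True thus ?thesis by (simp add: tau_0)
next
  case False
  have L1: "G ` affine_line 1 y (- y) = affine_line 1 (\<tau> y) (- (\<tau> y))"
    by (rule image_affine_line_eq[of _ _ "(0, 1)" "(y, 0)"]) (auto intro: is_affine_lineI simp: G_eq tau_1 tau_0)
  have "affine_line 1 y (- (x + y)) \<inter> affine_line 1 y (- y) = {} \<or> affine_line 1 y (- (x + y)) = affine_line 1 y (- y)"
    by (cases "x = 0") auto
  from image_parallel_affine_line[OF is_affine_lineI _ this L1 _ _ G_eq[of x 1]]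
  have "G ` affine_line 1 y (- (x + y)) = affine_line 1 (\<tau> y) (- (\<tau> x + \<tau> y))" by (simp add: tau_1)
  moreover have "G (x + y, 0) \<in> G ` affine_line 1 y (- (x + y))" by auto
  ultimately show ?thesis using G_eq tau_0 by (simp add: add_eq_0_iff2)
qed

lemma tau_mult: "\<tau> (x * y) = \<tau> x * \<tau> y"
proof (cases "x = 0")
  case True thus ?thesis by (simp add: tau_0)
next
  case False
  have L1: "G ` affine_line 1 x (- x) = affine_line 1 (\<tau> x) (- (\<tau> x))"
    by (rule image_affine_line_eq[of _ _ "(0, 1)" "(x, 0)"]) (auto intro: is_affine_lineI simp: G_eq tau_1 tau_0)
  have "affine_line 1 x (- (x * y)) \<inter> affine_line 1 x (- x) = {} \<or> affine_line 1 x (- (x * y)) = affine_line 1 x (- x)"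
    using False by (cases "y = 1") auto
  from image_parallel_affine_line[OF is_affine_lineI _ this L1 _ _ G_eq[of 0 y]]
  have "G ` affine_line 1 x (- (x * y)) = affine_line 1 (\<tau> x) (- (\<tau> x * \<tau> y))" by (simp add: tau_0)
  moreover have "G (x * y, 0) \<in> G ` affine_line 1 x (- (x * y))" by auto
  ultimately show ?thesis using G_eq tau_0 by (simp add: add_eq_0_iff2)
qed

lemma field_automorphism_tau: "field_automorphism \<tau>"
proof
  have "inj \<tau>"
    using inj_G G_x_axis by (metis (no_types, lifting) injI inj_eq prod.inject)
  thus "bij \<tau>"
    by (simp add: bij_def finite_UNIV_inj_surj)
qed (simp_all add: tau_add tau_mult tau_1)

end

definition affine_map :: "'a::field \<Rightarrow> 'a \<Rightarrow> 'a \<Rightarrow> 'a \<Rightarrow> 'a \<Rightarrow> 'a \<Rightarrow> 'a \<times> 'a \<Rightarrow> 'a \<times> 'a" where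
  "affine_map m11 m12 m21 m22 t1 t2 v =
     (m11 * fst v + m12 * snd v + t1, m21 * fst v + m22 * snd v + t2)"

lemma affine_map_vimage_affine_line:
  "affine_map m11 m12 m21 m22 t1 t2 -` affine_line a b c =
     affine_line (a * m11 + b * m21) (a * m12 + b * m22) (a * t1 + b * t2 + c)"
  by (auto simp: affine_map_def algebra_simps)

lemma is_affine_line_affine_map_vimage:
  assumes det: "m11 * m22 - m12 * m21 \<noteq> 0" and L: "is_affine_line L"
  shows "is_affine_line (affine_map m11 m12 m21 m22 t1 t2 -` L)"
proof -
  obtain a b c where ab: "(a, b) \<noteq> (0, 0)" and L: "L = affine_line a b c"
    using L by (auto simp: is_affine_line_def)
  have "a * (m11 * m22 - m12 * m21) = m22 * (a * m11 + b * m21) - m21 * (a * m12 + b * m22)"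
    "b * (m11 * m22 - m12 * m21) = m11 * (a * m12 + b * m22) - m12 * (a * m11 + b * m21)"
    by (simp_all add: algebra_simps)
  hence "(a * m11 + b * m21, a * m12 + b * m22) \<noteq> (0, 0)"
    using ab det by auto
  thus ?thesis
    unfolding L affine_map_vimage_affine_line by (rule is_affine_lineI)
qed

lemma bij_affine_map:
  assumes det: "m11 * m22 - m12 * m21 \<noteq> 0"
  shows "bij (affine_map m11 m12 m21 m22 t1 t2)"
proof -
  define D where "D = m11 * m22 - m12 * m21"
  define g where "g w = ((m22 * (fst w - t1) - m12 * (snd w - t2)) / D,
                         (m11 * (snd w - t2) - m21 * (fst w - t1)) / D)" for w
  have D: "D \<noteq> 0"
    using det by (simp add: D_def)
  have "g (affine_map m11 m12 m21 m22 t1 t2 (x, y)) = (x * D / D, y * D / D)" for x y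
    by (simp add: g_def D_def affine_map_def algebra_simps)
  hence left_inverse: "g (affine_map m11 m12 m21 m22 t1 t2 v) = v" for v
    using D by (cases v) simp
  have "affine_map m11 m12 m21 m22 t1 t2 (g (x, y)) =
      ((m11 * (m22 * (x - t1) - m12 * (y - t2)) + m12 * (m11 * (y - t2) - m21 * (x - t1))) / D + t1,
       (m21 * (m22 * (x - t1) - m12 * (y - t2)) + m22 * (m11 * (y - t2) - m21 * (x - t1))) / D + t2)"
    for x y
    using D by (simp add: g_def affine_map_def field_simps)
  moreover have "m11 * (m22 * (x - t1) - m12 * (y - t2)) + m12 * (m11 * (y - t2) - m21 * (x - t1))
      = (x - t1) * D"
    "m21 * (m22 * (x - t1) - m12 * (y - t2)) + m22 * (m11 * (y - t2) - m21 * (x - t1))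
      = (y - t2) * D" for x y
    by (simp_all add: D_def algebra_simps)
  ultimately have "affine_map m11 m12 m21 m22 t1 t2 (g w) = w" for w
    using D by (cases w) simp
  thus ?thesis
    using left_inverse by (intro bij_betw_byWitness[where f' = g]) auto
qed

lemma (in affine_collineation) frame_image_not_collinear:
  assumes t: "G (0, 0) = (t1, t2)" and m1: "G (1, 0) = (m11 + t1, m21 + t2)"
    and m2: "G (0, 1) = (m12 + t1, m22 + t2)"
  shows "m11 * m22 - m12 * m21 \<noteq> 0"
proof
  assume det: "m11 * m22 - m12 * m21 = 0"
  have "(m11, m21) \<noteq> (0, 0)"
  proof
    assume "(m11, m21) = (0, 0)"
    hence "G (1, 0) = G (0, 0)"
      using m1 t by simp
    thus False
      by (simp add: inj_eq[OF inj_G])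
  qed
  hence line: "is_affine_line (affine_line m21 (- m11) (m11 * t2 - m21 * t1))"
    by (intro is_affine_lineI) auto
  have "G ` affine_line 0 1 0 = affine_line m21 (- m11) (m11 * t2 - m21 * t1)"
    by (rule image_affine_line_eq[where P = "(0, 0)" and R = "(1, 0)"])
      (auto intro: is_affine_lineI line simp: t m1 algebra_simps)
  moreover have "G (0, 1) \<in> affine_line m21 (- m11) (m11 * t2 - m21 * t1)"
    using det by (simp add: m2 algebra_simps)
  ultimately obtain v where "v \<in> affine_line 0 1 0" "G v = G (0, 1)"
    by (metis imageE)
  thus False
    by (simp add: inj_eq[OF inj_G])
qed

text \<open>The fundamental theorem of affine geometry over a finite field: after composing with the
  affine map that sends the frame \<open>(0, 0), (1, 0), (0, 1)\<close> to its image, an affine collineation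
  becomes the coordinatewise application of a field automorphism.\<close>
theorem (in affine_collineation) semilinear:
  obtains \<tau> m11 m12 m21 m22 t1 t2 where "field_automorphism \<tau>" "m11 * m22 - m12 * m21 \<noteq> 0"
    "\<And>x y. G (x, y) = (m11 * \<tau> x + m12 * \<tau> y + t1, m21 * \<tau> x + m22 * \<tau> y + t2)"
proof -
  obtain t1 t2 where t: "G (0, 0) = (t1, t2)"
    by fastforce
  obtain m11 m21 where m1: "G (1, 0) = (m11 + t1, m21 + t2)"
    using that[of "fst (G (1, 0)) - t1" "snd (G (1, 0)) - t2"] by simp
  obtain m12 m22 where m2: "G (0, 1) = (m12 + t1, m22 + t2)"
    using that[of "fst (G (0, 1)) - t1" "snd (G (0, 1)) - t2"] by simp
  let ?B = "affine_map m11 m12 m21 m22 t1 t2"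
  have det: "m11 * m22 - m12 * m21 \<noteq> 0"
    using t m1 m2 by (rule frame_image_not_collinear)
  have bij_B: "bij ?B"
    using det by (rule bij_affine_map)
  have frame: "G (0, 0) = ?B (0, 0)" "G (1, 0) = ?B (1, 0)" "G (0, 1) = ?B (0, 1)"
    using t m1 m2 by (simp_all add: affine_map_def)
  interpret normalized: affine_collineation_fixing_frame "inv_into UNIV ?B \<circ> G"
  proof
    show "bij (inv_into UNIV ?B \<circ> G)"
      using bij_B bij_G by (intro bij_comp bij_imp_bij_inv)
    show "is_affine_line ((inv_into UNIV ?B \<circ> G) ` L)" if "is_affine_line L" for L
      using is_affine_line_affine_map_vimage[OF det G_lines[OF that], of t1 t2]
      by (simp only: bij_vimage_eq_inv_image[OF bij_B] image_comp)
  qed (simp_all add: frame inv_f_f[OF bij_is_inj[OF bij_B]])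
  show thesis
  proof (rule that[OF normalized.field_automorphism_tau det])
    fix x y
    have "G (x, y) = ?B (inv_into UNIV ?B (G (x, y)))"
      using bij_B by (simp add: bij_is_surj surj_f_inv_f)
    also have "inv_into UNIV ?B (G (x, y)) = (normalized.\<tau> x, normalized.\<tau> y)"
      using normalized.G_eq[of x y] by simp
    finally show "G (x, y) = (m11 * normalized.\<tau> x + m12 * normalized.\<tau> y + t1,
                      m21 * normalized.\<tau> x + m22 * normalized.\<tau> y + t2)"
      by (simp add: normalized.G_eq affine_map_def)
  qed
qed

lemma point_at_infinity_of_line:
  assumes l: "l \<in> lines" "Aff u v \<in> l" "Aff (u + w1) (v + w2) \<in> l"
    and w: "(w1, w2) \<noteq> (0, 0)" and R: "R \<in> l" "R \<in> line_inf"
  shows "R = pt w1 w2 0"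
proof (rule ccontr)
  assume ne: "R \<noteq> pt w1 w2 0"
  obtain a b c where abc: "l = pline a b c"
    using l(1) by (auto simp: lines_def)
  have "a * u + b * v + c = 0" "a * (u + w1) + b * (v + w2) + c = 0"
    using l(2, 3) by (simp_all add: abc)
  moreover have "a * w1 + b * w2 = (a * (u + w1) + b * (v + w2) + c) - (a * u + b * v + c)"
    by (simp add: algebra_simps)
  ultimately have "pt w1 w2 0 \<in> l"
    using w by (simp add: abc pt_in_pline_iff)
  moreover have "pt w1 w2 0 \<in> line_inf"
    using w by (simp add: line_inf_def pt_in_pline_iff)
  ultimately have "l = line_inf"
    using lines_eq_if_two_common_points[OF l(1) line_inf_in_lines ne] R by blast
  thus False
    using l(2) by simp
qed

locale collineation_fixing_line_inf =
  fixes \<sigma> :: "'a::{field, finite} ppoint \<Rightarrow> 'a ppoint"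
  assumes collineation: "collineation \<sigma>" and fixes_line_inf: "\<sigma> ` line_inf = line_inf"
begin

lemma inj_on_points: "inj_on \<sigma> points"
  using collineation by (rule collineation_inj_on)

lemma maps_points: "P \<in> points \<Longrightarrow> \<sigma> P \<in> points"
  using collineation by (auto simp: collineation_def bij_betw_def)

lemma in_line_inf_iff:
  assumes "P \<in> points"
  shows "\<sigma> P \<in> line_inf \<longleftrightarrow> P \<in> line_inf"
proof
  assume "\<sigma> P \<in> line_inf"
  then obtain R where "R \<in> line_inf" "\<sigma> R = \<sigma> P"
    using fixes_line_inf by (metis imageE)
  thus "P \<in> line_inf"
    using inj_on_points assms lines_subset_points[OF line_inf_in_lines] by (metis inj_onD subsetD)
qed (use fixes_line_inf in blast)

definition affine_part :: "'a \<times> 'a \<Rightarrow> 'a \<times> 'a" where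
  "affine_part v = (SOME w. \<sigma> (Aff (fst v) (snd v)) = Aff (fst w) (snd w))"

lemma Aff_affine_part: "\<sigma> (Aff x y) = Aff (fst (affine_part (x, y))) (snd (affine_part (x, y)))"
proof -
  have "\<sigma> (Aff x y) \<in> points" "\<sigma> (Aff x y) \<notin> line_inf"
    using maps_points in_line_inf_iff by auto
  then obtain u v where "\<sigma> (Aff x y) = Aff u v"
    by (rule affine_point_cases)
  hence "\<exists>w. \<sigma> (Aff x y) = Aff (fst w) (snd w)"
    by (intro exI[of _ "(u, v)"]) simp
  thus ?thesis
    unfolding affine_part_def fst_conv snd_conv by (rule someI_ex)
qed

lemma image_pline_not_line_inf:
  assumes ab: "(a, b) \<noteq> (0, 0)"
  obtains a' b' c' where "(a', b') \<noteq> (0, 0)" "\<sigma> ` pline a b c = pline a' b' c'"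
proof -
  let ?l = "pline a b c"
  have l_lines: "\<sigma> ` ?l \<in> lines"
    using ab by (intro collineation_image_in_lines[OF collineation] pline_in_lines) auto
  obtain x0 y0 where "Aff x0 y0 \<in> ?l"
  proof (cases "b = 0")
    case True
    thus thesis
      using that[of "- c / a" 0] ab by simp
  next
    case False
    thus thesis
      using that[of 0 "- c / b"] by simp
  qed
  hence "\<sigma> ` ?l \<noteq> line_inf"
    using in_line_inf_iff[of "Aff x0 y0"] by auto
  thus thesis
  proof (cases rule: lines_cases[OF l_lines])
    case (2 k)
    thus thesis
      using that[of 1 0 "- k"] by simp
  next
    case (3 m k)
    thus thesis
      using that[of m "- 1" k] by simp
  qed simp
qed

lemma image_affine_line_affine_part:
  assumes ab: "(a, b) \<noteq> (0, 0)"
  obtains a' b' c' where "(a', b') \<noteq> (0, 0)" "affine_part ` affine_line a b c = affine_line a' b' c'"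
proof -
  obtain a' b' c' where l': "(a', b') \<noteq> (0, 0)" "\<sigma> ` pline a b c = pline a' b' c'"
    using ab by (rule image_pline_not_line_inf)
  have "affine_part ` affine_line a b c = affine_line a' b' c'"
  proof (intro equalityI subsetI)
    fix w
    assume "w \<in> affine_part ` affine_line a b c"
    then obtain x y where "Aff x y \<in> pline a b c" "w = affine_part (x, y)"
      by auto
    moreover from this(1) have "\<sigma> (Aff x y) \<in> pline a' b' c'"
      using l'(2) by blast
    ultimately show "w \<in> affine_line a' b' c'"
      using Aff_affine_part[of x y] by (simp add: affine_line_def case_prod_beta)
  next
    fix w
    assume "w \<in> affine_line a' b' c'"
    then obtain u v where w: "w = (u, v)" "Aff u v \<in> \<sigma> ` pline a b c"
      using l'(2) by (cases w) simp
    then obtain P where P: "P \<in> pline a b c" "\<sigma> P = Aff u v"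
      by auto
    have "P \<in> points"
      using P(1) pline_subset_points by blast
    moreover have "P \<notin> line_inf"
      using in_line_inf_iff[OF \<open>P \<in> points\<close>] P(2) by simp
    ultimately obtain x y where "P = Aff x y"
      by (rule affine_point_cases)
    thus "w \<in> affine_part ` affine_line a b c"
      using P w Aff_affine_part[of x y] by (auto intro!: image_eqI[of _ _ "(x, y)"] simp: prod_eq_iff)
  qed
  thus thesis
    using that l'(1) by blast
qed

lemma affine_collineation_affine_part: "affine_collineation affine_part"
proof
  have "inj affine_part"
  proof (rule injI)
    fix v w
    assume "affine_part v = affine_part w"
    hence "\<sigma> (Aff (fst v) (snd v)) = \<sigma> (Aff (fst w) (snd w))"
      by (simp add: Aff_affine_part)
    hence "Aff (fst v) (snd v) = Aff (fst w) (snd w)"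
      by (rule inj_onD[OF inj_on_points]) simp_all
    thus "v = w"
      by (simp add: prod_eq_iff)
  qed
  thus "bij affine_part"
    by (simp add: bij_def finite_UNIV_inj_surj)
  show "is_affine_line (affine_part ` L)" if "is_affine_line L" for L
  proof -
    from that obtain a b c where ab: "(a, b) \<noteq> (0, 0)" and L: "L = affine_line a b c"
      unfolding is_affine_line_def by blast
    obtain a' b' c' where "(a', b') \<noteq> (0, 0)" "affine_part ` affine_line a b c = affine_line a' b' c'"
      by (rule image_affine_line_affine_part[OF ab, of c])
    thus ?thesis
      unfolding L by (simp add: is_affine_lineI)
  qed
qed

lemma semilinear_on_affine_points:
  obtains \<tau> m11 m12 m21 m22 t1 t2 where "field_automorphism \<tau>" "m11 * m22 - m12 * m21 \<noteq> 0"
    "\<And>x y. \<sigma> (Aff x y) = Aff (m11 * \<tau> x + m12 * \<tau> y + t1) (m21 * \<tau> x + m22 * \<tau> y + t2)"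
proof -
  obtain \<tau> m11 m12 m21 m22 t1 t2 where "field_automorphism \<tau>" "m11 * m22 - m12 * m21 \<noteq> 0"
    and "\<And>x y. affine_part (x, y) = (m11 * \<tau> x + m12 * \<tau> y + t1, m21 * \<tau> x + m22 * \<tau> y + t2)"
    using affine_collineation.semilinear[OF affine_collineation_affine_part] by metis
  thus thesis
    using that Aff_affine_part by simp
qed

lemma semilinear_at_infinity:
  assumes \<tau>: "field_automorphism \<tau>" and det: "m11 * m22 - m12 * m21 \<noteq> 0"
    and affine: "\<And>x y. \<sigma> (Aff x y) = Aff (m11 * \<tau> x + m12 * \<tau> y + t1) (m21 * \<tau> x + m22 * \<tau> y + t2)"
    and uv: "(u, v) \<in> {(1, m) | m. True} \<union> {(0, 1)}"
  shows "\<sigma> (pt u v 0) = pt (m11 * \<tau> u + m12 * \<tau> v) (m21 * \<tau> u + m22 * \<tau> v) 0"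
proof (rule point_at_infinity_of_line)
  interpret \<tau>: field_automorphism \<tau>
    by (rule \<tau>)
  let ?l = "pline v (- u) 0"
  show "\<sigma> ` ?l \<in> lines"
    using uv by (intro collineation_image_in_lines[OF collineation] pline_in_lines) auto
  show "Aff t1 t2 \<in> \<sigma> ` ?l"
    using affine[of 0 0] by (auto simp: \<tau>.zero intro!: image_eqI[of _ _ "Aff 0 0"])
  show "Aff (t1 + (m11 * \<tau> u + m12 * \<tau> v)) (t2 + (m21 * \<tau> u + m22 * \<tau> v)) \<in> \<sigma> ` ?l"
    using affine[of u v] by (auto simp: algebra_simps intro!: image_eqI[of _ _ "Aff u v"])
  have "m11 * m22 - m12 * m21 = m22 * (m11 * \<tau> u + m12 * \<tau> v) - m12 * (m21 * \<tau> u + m22 * \<tau> v)"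
    if "u = 1" using that by (simp add: \<tau>.one algebra_simps)
  moreover have "m11 * m22 - m12 * m21 = m11 * (m21 * \<tau> u + m22 * \<tau> v) - m21 * (m11 * \<tau> u + m12 * \<tau> v)"
    if "u = 0" "v = 1" using that by (simp add: \<tau>.zero \<tau>.one algebra_simps)
  ultimately show "(m11 * \<tau> u + m12 * \<tau> v, m21 * \<tau> u + m22 * \<tau> v) \<noteq> (0, 0)"
    using uv det by auto
  show "\<sigma> (pt u v 0) \<in> \<sigma> ` ?l" "\<sigma> (pt u v 0) \<in> line_inf"
    using uv in_line_inf_iff by (auto simp: pt_in_pline_iff line_inf_def)
qed

theorem semilinear:
  obtains \<tau> m11 m12 m21 m22 t1 t2 where "field_automorphism \<tau>" "m11 * m22 - m12 * m21 \<noteq> 0"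
    "\<And>x y z. (x, y, z) \<noteq> (0, 0, 0) \<Longrightarrow>
       \<sigma> (pt x y z) = pt (m11 * \<tau> x + m12 * \<tau> y + t1 * \<tau> z) (m21 * \<tau> x + m22 * \<tau> y + t2 * \<tau> z) (\<tau> z)"
proof -
  obtain \<tau> m11 m12 m21 m22 t1 t2 where \<tau>: "field_automorphism \<tau>" and det: "m11 * m22 - m12 * m21 \<noteq> 0"
    and affine: "\<And>x y. \<sigma> (Aff x y) = Aff (m11 * \<tau> x + m12 * \<tau> y + t1) (m21 * \<tau> x + m22 * \<tau> y + t2)"
    using semilinear_on_affine_points by metis
  interpret \<tau>: field_automorphism \<tau>
    by (rule \<tau>)
  define image where "image x y z =
    pt (m11 * \<tau> x + m12 * \<tau> y + t1 * \<tau> z) (m21 * \<tau> x + m22 * \<tau> y + t2 * \<tau> z) (\<tau> z)" for x y z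
  have image_smult: "image (c * x) (c * y) (c * z) = image x y z" if "c \<noteq> 0" for c x y z
  proof -
    have "image (c * x) (c * y) (c * z) =
      pt (\<tau> c * (m11 * \<tau> x + m12 * \<tau> y + t1 * \<tau> z)) (\<tau> c * (m21 * \<tau> x + m22 * \<tau> y + t2 * \<tau> z))
        (\<tau> c * \<tau> z)"
      by (simp add: image_def \<tau>.mult algebra_simps)
    also have "\<dots> = image x y z"
      using pt_smult[of "\<tau> c"] that \<tau>.eq_0_iff by (simp add: image_def)
    finally show ?thesis .
  qed
  have normal_forms: "\<sigma> (pt x y z) = image x y z"
    if "(x, y, z) \<in> {(x, y, 1) | x y. True} \<union> {(1, m, 0) | m. True} \<union> {(0, 1, 0)}" for x y z
    using that affine semilinear_at_infinity[OF \<tau> det affine] by (auto simp: image_def \<tau>.zero \<tau>.one)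
  show thesis
  proof (rule that[OF \<tau> det])
    fix x y z :: 'a
    assume xyz: "(x, y, z) \<noteq> (0, 0, 0)"
    obtain x0 y0 z0 where normal: "(x0, y0, z0) \<in> {(x, y, 1) | x y. True} \<union> {(1, m, 0) | m. True} \<union> {(0, 1, 0)}"
      and eq: "pt x y z = pt x0 y0 z0"
      using pt_in_points[OF xyz] by (cases rule: points_cases) auto
    then obtain c where "c \<noteq> 0" "x = c * x0" "y = c * y0" "z = c * z0"
      using pt_eq_pt_iff[of x0 y0 z0 x y z] by auto
    hence "image x y z = image x0 y0 z0"
      using image_smult by simp
    thus "\<sigma> (pt x y z) =
      pt (m11 * \<tau> x + m12 * \<tau> y + t1 * \<tau> z) (m21 * \<tau> x + m22 * \<tau> y + t2 * \<tau> z) (\<tau> z)"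
      using normal_forms[OF normal] eq by (simp add: image_def)
  qed
qed

end

section \<open>Conics\<close>

definition quadratic_form :: "'a::comm_ring_1 \<Rightarrow> 'a \<Rightarrow> 'a \<Rightarrow> 'a \<Rightarrow> 'a \<Rightarrow> 'a \<Rightarrow> 'a \<Rightarrow> 'a \<Rightarrow> 'a \<Rightarrow> 'a" where
  "quadratic_form a b c d e f x y z = a * x^2 + b * y^2 + c * z^2 + d * x * y + e * x * z + f * y * z"

definition conic :: "'a::field \<Rightarrow> 'a \<Rightarrow> 'a \<Rightarrow> 'a \<Rightarrow> 'a \<Rightarrow> 'a \<Rightarrow> 'a ppoint set" where
  "conic a b c d e f = {P \<in> points. \<forall>(x, y, z) \<in> P. quadratic_form a b c d e f x y z = 0}"

text \<open>The determinant of the symmetric matrix of the polar form of \<open>quadratic_form a b c d e f\<close>.\<close>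
definition polar_det :: "'a::comm_ring_1 \<Rightarrow> 'a \<Rightarrow> 'a \<Rightarrow> 'a \<Rightarrow> 'a \<Rightarrow> 'a \<Rightarrow> 'a" where
  "polar_det a b c d e f =
     (2 * a) * ((2 * b) * (2 * c) - f * f) - d * (d * (2 * c) - f * e) + e * (d * f - (2 * b) * e)"

lemma nondeg_conic_iff:
  "nondeg_conic C \<longleftrightarrow> (\<exists>a b c d e f. polar_det a b c d e f \<noteq> 0 \<and> C = conic a b c d e f)"
  by (simp add: nondeg_conic_def conic_def quadratic_form_def polar_det_def)

lemma pt_in_conic_iff:
  assumes "(x, y, z) \<noteq> (0, 0, 0)"
  shows "pt x y z \<in> conic a b c d e f \<longleftrightarrow> quadratic_form a b c d e f x y z = 0"
proof
  show "pt x y z \<in> conic a b c d e f \<Longrightarrow> quadratic_form a b c d e f x y z = 0"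
    using self_in_pt[of x y z] by (auto simp: conic_def)
next
  assume "quadratic_form a b c d e f x y z = 0"
  moreover have "quadratic_form a b c d e f (k * x) (k * y) (k * z) = k^2 * quadratic_form a b c d e f x y z" for k
    by (simp add: quadratic_form_def algebra_simps power2_eq_square)
  ultimately show "pt x y z \<in> conic a b c d e f"
    using pt_in_points[OF assms] by (auto simp: conic_def pt_def)
qed

lemma Aff_in_conic_iff [simp]:
  "Aff x y \<in> conic a b c d e f \<longleftrightarrow> a * x^2 + b * y^2 + c + d * x * y + e * x + f * y = 0"
  by (subst pt_in_conic_iff) (auto simp: quadratic_form_def)

lemma Dir_in_conic_iff [simp]: "Dir m \<in> conic a b c d e f \<longleftrightarrow> a + b * m^2 + d * m = 0"
  by (subst pt_in_conic_iff) (auto simp: quadratic_form_def)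

lemma affine_substitution_quadratic_form:
  fixes a b c d e f m11 m12 m21 m22 t1 t2 :: "'a::idom"
  shows "\<exists>a' b' c' d' e' f'.
    polar_det a' b' c' d' e' f' = (m11 * m22 - m12 * m21)^2 * polar_det a b c d e f \<and>
    (\<forall>u v w. quadratic_form a b c d e f (m11 * u + m12 * v + t1 * w) (m21 * u + m22 * v + t2 * w) w
       = quadratic_form a' b' c' d' e' f' u v w)"
proof (intro exI conjI allI)
  show "polar_det (a * m11^2 + b * m21^2 + d * m11 * m21) (a * m12^2 + b * m22^2 + d * m12 * m22)
      (a * t1^2 + b * t2^2 + c + d * t1 * t2 + e * t1 + f * t2)
      (2 * a * m11 * m12 + 2 * b * m21 * m22 + d * (m11 * m22 + m12 * m21))
      (2 * a * m11 * t1 + 2 * b * m21 * t2 + d * (m11 * t2 + m21 * t1) + e * m11 + f * m21)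
      (2 * a * m12 * t1 + 2 * b * m22 * t2 + d * (m12 * t2 + m22 * t1) + e * m12 + f * m22)
    = (m11 * m22 - m12 * m21)^2 * polar_det a b c d e f"
    unfolding polar_det_def by Groebner_Basis.algebra
  show "quadratic_form a b c d e f (m11 * u + m12 * v + t1 * w) (m21 * u + m22 * v + t2 * w) w =
    quadratic_form (a * m11^2 + b * m21^2 + d * m11 * m21) (a * m12^2 + b * m22^2 + d * m12 * m22)
      (a * t1^2 + b * t2^2 + c + d * t1 * t2 + e * t1 + f * t2)
      (2 * a * m11 * m12 + 2 * b * m21 * m22 + d * (m11 * m22 + m12 * m21))
      (2 * a * m11 * t1 + 2 * b * m21 * t2 + d * (m11 * t2 + m21 * t1) + e * m11 + f * m21)
      (2 * a * m12 * t1 + 2 * b * m22 * t2 + d * (m12 * t2 + m22 * t1) + e * m12 + f * m22) u v w"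
    for u v w
    unfolding quadratic_form_def by Groebner_Basis.algebra
qed

context field_automorphism
begin

lemma quadratic_form:
  "\<tau> (quadratic_form a b c d e f x y z) =
     quadratic_form (\<tau> a) (\<tau> b) (\<tau> c) (\<tau> d) (\<tau> e) (\<tau> f) (\<tau> x) (\<tau> y) (\<tau> z)"
  by (simp add: quadratic_form_def add mult power)

lemma polar_det:
  "\<tau> (polar_det a b c d e f) = polar_det (\<tau> a) (\<tau> b) (\<tau> c) (\<tau> d) (\<tau> e) (\<tau> f)"
  by (simp add: polar_det_def add diff mult numeral)

lemma semilinear_image_neq_0:
  assumes det: "m11 * m22 - m12 * m21 \<noteq> 0" and xyz: "(x, y, z) \<noteq> (0, 0, 0)"
  shows "(m11 * \<tau> x + m12 * \<tau> y + t1 * \<tau> z, m21 * \<tau> x + m22 * \<tau> y + t2 * \<tau> z, \<tau> z) \<noteq> (0, 0, 0)"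
proof
  assume image_0: "(m11 * \<tau> x + m12 * \<tau> y + t1 * \<tau> z, m21 * \<tau> x + m22 * \<tau> y + t2 * \<tau> z, \<tau> z) = (0, 0, 0)"
  hence "z = 0"
    by (simp add: eq_0_iff)
  hence xy_0: "m11 * \<tau> x + m12 * \<tau> y = 0" "m21 * \<tau> x + m22 * \<tau> y = 0"
    using image_0 by (simp_all add: zero)
  have "(m11 * m22 - m12 * m21) * \<tau> x = m22 * (m11 * \<tau> x + m12 * \<tau> y) - m12 * (m21 * \<tau> x + m22 * \<tau> y)"
    "(m11 * m22 - m12 * m21) * \<tau> y = m11 * (m21 * \<tau> x + m22 * \<tau> y) - m21 * (m11 * \<tau> x + m12 * \<tau> y)"
    by (simp_all add: algebra_simps)
  hence "x = 0" "y = 0"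
    using xy_0 det by (simp_all add: eq_0_iff)
  thus False
    using xyz \<open>z = 0\<close> by simp
qed

end

lemma (in collineation_fixing_line_inf) nondeg_conic_vimage:
  assumes "nondeg_conic C"
  shows "nondeg_conic {P \<in> points. \<sigma> P \<in> C}"
proof -
  obtain a b c d e f where det: "polar_det a b c d e f \<noteq> 0" and C: "C = conic a b c d e f"
    using assms by (auto simp: nondeg_conic_iff)
  obtain \<tau> m11 m12 m21 m22 t1 t2 where \<tau>: "field_automorphism \<tau>"
    and M: "m11 * m22 - m12 * m21 \<noteq> 0"
    and \<sigma>: "\<And>x y z. (x, y, z) \<noteq> (0, 0, 0) \<Longrightarrow>
      \<sigma> (pt x y z) = pt (m11 * \<tau> x + m12 * \<tau> y + t1 * \<tau> z) (m21 * \<tau> x + m22 * \<tau> y + t2 * \<tau> z) (\<tau> z)"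
    using semilinear by metis
  interpret \<tau>: field_automorphism \<tau>
    by (rule \<tau>)
  obtain a' b' c' d' e' f' where
    det': "polar_det a' b' c' d' e' f' = (m11 * m22 - m12 * m21)^2 * polar_det a b c d e f" and
    subst: "\<And>u v w. quadratic_form a b c d e f (m11 * u + m12 * v + t1 * w) (m21 * u + m22 * v + t2 * w) w
       = quadratic_form a' b' c' d' e' f' u v w"
    using affine_substitution_quadratic_form[of m11 m22 m12 m21 a b c d e f t1 t2] by blast
  define inv\<tau> where "inv\<tau> = inv_into UNIV \<tau>"
  let ?C' = "conic (inv\<tau> a') (inv\<tau> b') (inv\<tau> c') (inv\<tau> d') (inv\<tau> e') (inv\<tau> f')"
  have "\<tau> (polar_det (inv\<tau> a') (inv\<tau> b') (inv\<tau> c') (inv\<tau> d') (inv\<tau> e') (inv\<tau> f')) \<noteq> 0"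
    using det' det M by (simp add: \<tau>.polar_det \<tau>.apply_inv inv\<tau>_def)
  hence det_C': "polar_det (inv\<tau> a') (inv\<tau> b') (inv\<tau> c') (inv\<tau> d') (inv\<tau> e') (inv\<tau> f') \<noteq> 0"
    using \<tau>.zero by auto
  have "\<sigma> (pt x y z) \<in> C \<longleftrightarrow> pt x y z \<in> ?C'" if xyz: "(x, y, z) \<noteq> (0, 0, 0)" for x y z
  proof -
    have "\<sigma> (pt x y z) \<in> C \<longleftrightarrow> quadratic_form a' b' c' d' e' f' (\<tau> x) (\<tau> y) (\<tau> z) = 0"
      using \<tau>.semilinear_image_neq_0[OF M xyz] by (simp add: \<sigma>[OF xyz] C pt_in_conic_iff subst)
    also have "quadratic_form a' b' c' d' e' f' (\<tau> x) (\<tau> y) (\<tau> z) =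
        \<tau> (quadratic_form (inv\<tau> a') (inv\<tau> b') (inv\<tau> c') (inv\<tau> d') (inv\<tau> e') (inv\<tau> f') x y z)"
      by (simp add: \<tau>.quadratic_form \<tau>.apply_inv inv\<tau>_def)
    also have "\<dots> = 0 \<longleftrightarrow> pt x y z \<in> ?C'"
      using xyz by (simp add: pt_in_conic_iff \<tau>.eq_0_iff)
    finally show ?thesis .
  qed
  hence "{P \<in> points. \<sigma> P \<in> C} = ?C'"
    by (intro subset_points_eqI) (auto simp: conic_def)
  thus ?thesis
    using det_C' unfolding nondeg_conic_iff by blast
qed

lemma conic_secant_second_point:
  fixes a b c d e f :: "'a::field"
  assumes P: "Aff x y \<in> conic a b c d e f" and Dir: "Dir t \<notin> conic a b c d e f"
    and secant: "(2 * a * x + d * y + e) + t * (2 * b * y + d * x + f) \<noteq> 0"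
  obtains u where "u \<noteq> 0" "Aff (x + u) (y + t * u) \<in> conic a b c d e f"
proof -
  let ?L = "(2 * a * x + d * y + e) + t * (2 * b * y + d * x + f)"
  let ?K = "a + b * t^2 + d * t"
  have K: "?K \<noteq> 0"
    using Dir by simp
  define u where "u = - ?L / ?K"
  have "u \<noteq> 0"
    unfolding u_def using secant K by (metis divide_eq_0_iff neg_equal_0_iff_equal)
  have "?L + u * ?K = 0"
    using K by (simp add: u_def)
  have "a * (x + u)^2 + b * (y + t * u)^2 + c + d * (x + u) * (y + t * u) + e * (x + u) + f * (y + t * u)
      = (a * x^2 + b * y^2 + c + d * x * y + e * x + f * y) + u * (?L + u * ?K)"
    by (simp add: algebra_simps power2_eq_square)
  also have "\<dots> = 0"
    unfolding \<open>?L + u * ?K = 0\<close> using P by simp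
  finally show thesis
    using that \<open>u \<noteq> 0\<close> by simp
qed

lemma conic_gradient_neq_0:
  fixes a b c d e f :: "'a::field"
  assumes det: "polar_det a b c d e f \<noteq> 0" and P: "Aff x y \<in> conic a b c d e f"
  shows "(2 * a * x + d * y + e, 2 * b * y + d * x + f) \<noteq> (0, 0)"
proof
  assume "(2 * a * x + d * y + e, 2 * b * y + d * x + f) = (0, 0)"
  hence gx: "2 * a * x + d * y + e = 0" and gy: "2 * b * y + d * x + f = 0"
    by simp_all
  have "e * x + f * y + 2 * c = 2 * (a * x^2 + b * y^2 + c + d * x * y + e * x + f * y)
      - x * (2 * a * x + d * y + e) - y * (2 * b * y + d * x + f)"
    by (simp add: algebra_simps power2_eq_square)
  also have "\<dots> = 0"
    unfolding gx gy using P by simp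
  finally have gz: "e * x + f * y + 2 * c = 0" .
  have "polar_det a b c d e f = (2 * a * x + d * y + e) * (d * f - 2 * b * e)
      - (2 * b * y + d * x + f) * (2 * a * f - d * e) + (e * x + f * y + 2 * c) * (4 * a * b - d * d)"
    by (simp add: polar_det_def algebra_simps)
  also have "\<dots> = 0"
    unfolding gx gy gz by simp
  finally show False
    using det by simp
qed

lemma conic_discriminant_neq_0:
  fixes a b c d e f :: "'a::field"
  assumes two: "(2::'a) \<noteq> 0" and b: "b \<noteq> 0" and Dir: "\<And>m. Dir m \<notin> conic a b c d e f"
  shows "d^2 - 4 * a * b \<noteq> 0"
proof
  assume disc: "d^2 - 4 * a * b = 0"
  have four: "(4::'a) \<noteq> 0"
    using two by (metis mult_2 numeral_Bit0 numeral_One one_add_one mult_eq_0_iff)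
  define m where "m = - d / (2 * b)"
  have bm: "2 * b * m = - d"
    using b two by (simp add: m_def)
  have "4 * b * (a + b * m^2 + d * m) = 4 * a * b + (2 * b * m)^2 + 2 * d * (2 * b * m)"
    by (simp add: algebra_simps power2_eq_square)
  also have "\<dots> = - (d^2 - 4 * a * b)"
    unfolding bm by (simp add: algebra_simps power2_eq_square)
  also have "\<dots> = 0"
    unfolding disc by simp
  finally have "Dir m \<in> conic a b c d e f"
    using b four by simp
  thus False
    using Dir by blast
qed

text \<open>Completing the square twice reduces the existence of an affine point to writing
  a given element as \<open>w\<^sup>2 - 4 A s\<^sup>2\<close>, which is always possible in a finite field.\<close>
lemma conic_ex_affine_point:
  fixes a b c d e f :: "'a::{field, finite}"
  assumes two: "(2::'a) \<noteq> 0" and b: "b \<noteq> 0" and Dir: "\<And>m. Dir m \<notin> conic a b c d e f"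
  obtains x y where "Aff x y \<in> conic a b c d e f"
proof -
  have four: "(4::'a) \<noteq> 0"
    using two by (metis mult_2 numeral_Bit0 numeral_One one_add_one mult_eq_0_iff)
  define A where "A = d^2 - 4 * a * b"
  have A: "A \<noteq> 0"
    unfolding A_def using two b Dir by (rule conic_discriminant_neq_0)
  define B where "B = 2 * d * f - 4 * b * e"
  define C where "C = f^2 - 4 * b * c"
  obtain w s where ws: "w^2 = (B^2 - 4 * A * C) + (4 * A) * s^2"
    using ex_square_eq_plus_times_square[of "4 * A" "B^2 - 4 * A * C"] A four by auto
  define x where "x = (w - B) / (2 * A)"
  have "2 * A * x + B = w"
    using A two by (simp add: x_def field_simps)
  moreover have "4 * A * (A * x^2 + B * x + C) = (2 * A * x + B)^2 - (B^2 - 4 * A * C)"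
    by (simp add: algebra_simps power2_eq_square)
  ultimately have "4 * A * (A * x^2 + B * x + C) = 4 * A * s^2"
    using ws by simp
  hence disc: "A * x^2 + B * x + C = s^2"
    using A four by simp
  define y where "y = (s - (d * x + f)) / (2 * b)"
  have "2 * b * y + (d * x + f) = s"
    using b two by (simp add: y_def field_simps)
  moreover have "4 * b * (a * x^2 + b * y^2 + c + d * x * y + e * x + f * y)
      = (2 * b * y + (d * x + f))^2 - (A * x^2 + B * x + C)"
    by (simp add: A_def B_def C_def algebra_simps power2_eq_square)
  ultimately have "4 * b * (a * x^2 + b * y^2 + c + d * x * y + e * x + f * y) = 0"
    using disc by simp
  thus thesis
    using that b four by simp
qed

lemma parabola_is_arc:
  fixes c2 c1 c0 :: "'a::{field, finite}"
  assumes "c2 \<noteq> 0"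
  shows "is_arc {Aff x (c2 * x^2 + c1 * x + c0) | x. True}"
  unfolding is_arc_def
proof
  fix l :: "'a ppoint set"
  assume l: "l \<in> lines"
  let ?f = "\<lambda>x. c2 * x^2 + c1 * x + c0"
  let ?G = "{Aff x (?f x) | x. True}"
  show "card (l \<inter> ?G) \<le> 2"
  proof (cases rule: lines_cases[OF l])
    case 1
    hence "l \<inter> ?G = {}"
      by auto
    thus ?thesis
      by simp
  next
    case (2 k)
    hence "l \<inter> ?G \<subseteq> {Aff k (?f k)}"
      by auto
    thus ?thesis
      using card_mono[of "{Aff k (?f k)}" "l \<inter> ?G"] by simp
  next
    case (3 m k)
    have "l \<inter> ?G \<subseteq> (\<lambda>x. Aff x (?f x)) ` {x. c2 * x^2 + (c1 - m) * x + (c0 - k) = 0}"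
    proof
      fix P
      assume "P \<in> l \<inter> ?G"
      then obtain x where x: "P = Aff x (?f x)" "m * x + (- 1) * ?f x + k = 0"
        using 3 by auto
      moreover have "c2 * x^2 + (c1 - m) * x + (c0 - k) = - (m * x + (- 1) * ?f x + k)"
        by (simp add: algebra_simps)
      ultimately show "P \<in> (\<lambda>x. Aff x (?f x)) ` {x. c2 * x^2 + (c1 - m) * x + (c0 - k) = 0}"
        by simp
    qed
    hence "card (l \<inter> ?G) \<le> card ((\<lambda>x. Aff x (?f x)) ` {x. c2 * x^2 + (c1 - m) * x + (c0 - k) = 0})"
      by (intro card_mono) auto
    also have "\<dots> \<le> card {x. c2 * x^2 + (c1 - m) * x + (c0 - k) = 0}"
      by (rule card_image_le) simp
    also have "\<dots> \<le> 2"
      using assms by (rule card_quadratic_roots_le_2)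
    finally show ?thesis .
  qed
qed

section \<open>Orthogonal Buekenhout--Metz unitals\<close>

lemma U_ab_subset_points: "U_ab q \<alpha> \<beta> \<subseteq> points"
  by (auto simp: U_ab_def)

lemma Aff_in_U_ab_iff: "Aff u v \<in> U_ab q \<alpha> \<beta> \<longleftrightarrow> v - \<alpha> * u^2 - \<beta> * u^(q + 1) \<in> subF q"
proof
  assume "Aff u v \<in> U_ab q \<alpha> \<beta>"
  then obtain x r where "Aff u v = Aff x (\<alpha> * x^2 + \<beta> * x^(q + 1) + r)" "r \<in> subF q"
    by (auto simp: U_ab_def)
  thus "v - \<alpha> * u^2 - \<beta> * u^(q + 1) \<in> subF q"
    by simp
next
  assume "v - \<alpha> * u^2 - \<beta> * u^(q + 1) \<in> subF q"
  thus "Aff u v \<in> U_ab q \<alpha> \<beta>"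
    unfolding U_ab_def by (intro UnI1 CollectI exI[of _ u] exI[of _ "v - \<alpha> * u^2 - \<beta> * u^(q + 1)"]) simp
qed

lemma Dir_notin_U_ab: "Dir m \<notin> U_ab q \<alpha> \<beta>"
  by (auto simp: U_ab_def)

lemma Pinf_in_U_ab: "Pinf \<in> U_ab q \<alpha> \<beta>"
  by (auto simp: U_ab_def)

locale BM_unital = gf_q_squared q field_type for q and field_type :: "'a::{field, finite} itself" +
  fixes \<alpha> \<beta> :: 'a
  assumes BM_params_ok: "BM_params_ok q \<alpha> \<beta>"
begin

text \<open>If \<open>\<alpha> u\<^sup>2 + \<beta> u\<^sup>q\<^sup>+\<^sup>1\<close> lay in GF(q) for some \<open>u \<noteq> 0\<close>, then
  \<open>s = \<alpha> u / u\<^sup>q + \<alpha>\<^sup>q u\<^sup>q / u\<close> would be an element of GF(q) whose square is the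
  discriminant \<open>(\<beta>\<^sup>q - \<beta>)\<^sup>2 + 4 \<alpha>\<^sup>q\<^sup>+\<^sup>1\<close>.\<close>
lemma BM_form_notin_subF:
  assumes u: "u \<noteq> 0"
  shows "\<alpha> * u^2 + \<beta> * u^(q + 1) \<notin> subF q"
proof
  assume in_subF: "\<alpha> * u^2 + \<beta> * u^(q + 1) \<in> subF q"
  define V where "V = u^q"
  have V: "V \<noteq> 0" "V^q = u"
    using u by (simp_all add: V_def power_q_power_q)
  have "(\<alpha> * u^2 + \<beta> * u * V)^q = \<alpha>^q * V^2 + \<beta>^q * V * u"
    by (simp add: power_q_add power_mult_distrib V(2) flip: V_def)
      (simp add: V_def mult.commute flip: power_mult)
  moreover have "\<alpha> * u^2 + \<beta> * u * V = \<alpha> * u^2 + \<beta> * u^(q + 1)"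
    by (simp add: V_def mult.commute)
  ultimately have eq: "\<alpha> * u^2 + \<beta> * u * V = \<alpha>^q * V^2 + \<beta>^q * V * u"
    using in_subF by (simp add: subF_def)
  define s where "s = \<alpha> * u / V + \<alpha>^q * V / u"
  have "s^q = \<alpha>^q * V / u + \<alpha> * u / V"
    by (simp add: s_def V_def power_q_add power_divide power_mult_distrib power_q_power_q)
  hence s: "s \<in> subF q"
    by (simp add: subF_def s_def add.commute)
  have "\<alpha> * u / V - \<alpha>^q * V / u = (\<alpha> * u^2 - \<alpha>^q * V^2) / (u * V)"
    using u V by (simp add: field_simps power2_eq_square)
  also have "\<alpha> * u^2 - \<alpha>^q * V^2 = (\<beta>^q - \<beta>) * (u * V)"
    using eq by (simp add: algebra_simps)
  finally have "\<alpha> * u / V - \<alpha>^q * V / u = \<beta>^q - \<beta>"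
    using u V by simp
  moreover have "s^2 = (\<alpha> * u / V - \<alpha>^q * V / u)^2 + 4 * \<alpha> * \<alpha>^q"
    unfolding s_def using u V by (simp add: field_simps power2_eq_square)
  ultimately have "s^2 = (\<beta>^q - \<beta>)^2 + 4 * \<alpha>^(q + 1)"
    by (simp add: mult.commute)
  thus False
    using BM_params_ok s by (auto simp: BM_params_ok_def nonsquare_in_subF_def)
qed

definition tangent_slope :: "'a \<Rightarrow> 'a" where
  "tangent_slope x = 2 * \<alpha> * x + (\<beta> - \<beta>^q) * x^q"

text \<open>Moving along this line by \<open>u\<close> changes \<open>y - \<alpha> x\<^sup>2 - \<beta> x\<^sup>q\<^sup>+\<^sup>1\<close>, which lies in GF(q) on the
  unital, by \<open>c - (\<alpha> u\<^sup>2 + \<beta> u\<^sup>q\<^sup>+\<^sup>1)\<close> with \<open>c \<in> GF(q)\<close>.\<close>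
lemma tangent_line_meets_U_ab_once:
  assumes P: "Aff x y \<in> U_ab q \<alpha> \<beta>" and u: "u \<noteq> 0"
  shows "Aff (x + u) (y + tangent_slope x * u) \<notin> U_ab q \<alpha> \<beta>"
proof
  assume P': "Aff (x + u) (y + tangent_slope x * u) \<in> U_ab q \<alpha> \<beta>"
  define X where "X = x^q"
  define V where "V = u^q"
  define c where "c = - (\<beta>^q * X * u) - \<beta> * x * V"
  have "c^q = - ((\<beta>^q)^q * X^q * u^q) - \<beta>^q * x^q * V^q"
    by (simp add: c_def power_q_diff power_q_minus power_mult_distrib)
  also have "\<dots> = c"
    by (simp add: c_def X_def V_def power_q_power_q)
  finally have c: "c \<in> subF q"
    by (simp add: subF_def)
  have powers: "(x + u)^(q + 1) = (X + V) * (x + u)" "x^(q + 1) = X * x" "u^(q + 1) = V * u"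
    by (simp_all add: X_def V_def power_q_add)
  let ?change = "(y + tangent_slope x * u - \<alpha> * (x + u)^2 - \<beta> * (x + u)^(q + 1))
    - (y - \<alpha> * x^2 - \<beta> * x^(q + 1))"
  have "\<alpha> * u^2 + \<beta> * u^(q + 1) = c - ?change"
    unfolding powers tangent_slope_def c_def X_def[symmetric] by (simp add: algebra_simps power2_eq_square)
  moreover have "?change \<in> subF q"
    by (rule subF_diff) (use P P' in \<open>simp_all add: Aff_in_U_ab_iff\<close>)
  ultimately have "\<alpha> * u^2 + \<beta> * u^(q + 1) \<in> subF q"
    using c subF_diff by simp
  thus False
    using BM_form_notin_subF[OF u] by simp
qed

lemma alpha_neq_0_if_beta_in_subF:
  assumes "\<beta> \<in> subF q"
  shows "\<alpha> \<noteq> 0"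
proof
  assume "\<alpha> = 0"
  hence "(\<beta>^q - \<beta>)^2 + 4 * \<alpha>^(q + 1) = 0^2"
    using assms q_ge_3 by (simp add: subF_def)
  thus False
    using BM_params_ok zero_in_subF by (auto simp: BM_params_ok_def nonsquare_in_subF_def)
qed

lemma Aff_in_U_ab_iff_if_beta_in_subF:
  assumes "\<beta> \<in> subF q"
  shows "Aff u v \<in> U_ab q \<alpha> \<beta> \<longleftrightarrow> v - \<alpha> * u^2 \<in> subF q"
proof -
  have norm: "\<beta> * u^(q + 1) \<in> subF q"
    using assms power_Suc_q_in_subF by (rule subF_mult)
  show ?thesis
    unfolding Aff_in_U_ab_iff
  proof
    assume "v - \<alpha> * u^2 - \<beta> * u^(q + 1) \<in> subF q"
    from subF_add[OF this norm] show "v - \<alpha> * u^2 \<in> subF q"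
      by simp
  next
    assume "v - \<alpha> * u^2 \<in> subF q"
    from subF_diff[OF this norm] show "v - \<alpha> * u^2 - \<beta> * u^(q + 1) \<in> subF q"
      by simp
  qed
qed

lemma secant_of_U_ab_if_slope_neq:
  assumes \<beta>: "\<beta> \<in> subF q" and P: "Aff x y \<in> U_ab q \<alpha> \<beta>" and m: "m \<noteq> 2 * \<alpha> * x"
  obtains u where "u \<noteq> 0" "Aff (x + u) (y + m * u) \<in> U_ab q \<alpha> \<beta>"
proof -
  have \<alpha>: "\<alpha> \<noteq> 0"
    using \<beta> by (rule alpha_neq_0_if_beta_in_subF)
  define u where "u = (m - 2 * \<alpha> * x) / \<alpha>"
  have "u \<noteq> 0"
    using m \<alpha> by (simp add: u_def)
  have "m - 2 * \<alpha> * x - \<alpha> * u = 0"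
    using \<alpha> by (simp add: u_def)
  have "y + m * u - \<alpha> * (x + u)^2 = (y - \<alpha> * x^2) + u * (m - 2 * \<alpha> * x - \<alpha> * u)"
    by (simp add: algebra_simps power2_eq_square)
  also have "\<dots> = y - \<alpha> * x^2"
    unfolding \<open>m - 2 * \<alpha> * x - \<alpha> * u = 0\<close> by simp
  finally have "y + m * u - \<alpha> * (x + u)^2 \<in> subF q"
    using P by (simp only: Aff_in_U_ab_iff_if_beta_in_subF[OF \<beta>])
  thus thesis
    using that[OF \<open>u \<noteq> 0\<close>] by (simp only: Aff_in_U_ab_iff_if_beta_in_subF[OF \<beta>])
qed

text \<open>For \<open>\<beta> \<in> GF(q)\<close> the only non-vertical tangent through an affine point \<open>(x, y)\<close> of the
  unital has slope \<open>2 \<alpha> x\<close>.\<close>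
lemma pedal_subset_parabola:
  assumes \<beta>: "\<beta> \<in> subF q"
  shows "pedal (U_ab q \<alpha> \<beta>) (Aff x0 y0) \<subseteq> {Aff x (2 * \<alpha> * x^2 - 2 * \<alpha> * x0 * x + y0) | x. True}"
proof
  fix P
  assume "P \<in> pedal (U_ab q \<alpha> \<beta>) (Aff x0 y0)"
  then obtain l where l: "l \<in> lines" "Aff x0 y0 \<in> l" "l \<inter> U_ab q \<alpha> \<beta> = {P}"
    by (auto simp: pedal_def tangent_lines_def)
  show "P \<in> {Aff x (2 * \<alpha> * x^2 - 2 * \<alpha> * x0 * x + y0) | x. True}"
  proof (cases rule: lines_cases[OF l(1)])
    case 1
    thus ?thesis
      using l by simp
  next
    case (2 k)
    hence "Pinf \<in> l \<inter> U_ab q \<alpha> \<beta>" "Aff x0 (\<alpha> * x0^2) \<in> l \<inter> U_ab q \<alpha> \<beta>"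
      using l(2) Pinf_in_U_ab Aff_in_U_ab_iff_if_beta_in_subF[OF \<beta>] zero_in_subF by simp_all
    thus ?thesis
      using l(3) by (metis Aff_neq_Pinf(1) singletonD)
  next
    case (3 m k)
    have P: "P \<in> l" "P \<in> U_ab q \<alpha> \<beta>"
      using l(3) by auto
    hence "P \<in> points"
      using U_ab_subset_points by blast
    then obtain x y where Pxy: "P = Aff x y"
      using P 3 Dir_notin_U_ab by (cases rule: points_cases) auto
    have y: "y = m * x + k" and y0: "y0 = m * x0 + k"
      using P(1) l(2) 3 Pxy by (simp_all add: algebra_simps)
    have "m = 2 * \<alpha> * x"
    proof (rule ccontr)
      assume "m \<noteq> 2 * \<alpha> * x"
      with \<beta> P(2) obtain u where "u \<noteq> 0" "Aff (x + u) (y + m * u) \<in> U_ab q \<alpha> \<beta>"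
        unfolding Pxy by (rule secant_of_U_ab_if_slope_neq)
      moreover have "Aff (x + u) (y + m * u) \<in> l"
        using 3 y by (simp add: algebra_simps)
      ultimately have "Aff (x + u) (y + m * u) = P"
        using l(3) by blast
      thus False
        using Pxy \<open>u \<noteq> 0\<close> by simp
    qed
    hence "y = 2 * \<alpha> * x^2 - 2 * \<alpha> * x0 * x + y0"
      using y y0 by (simp add: algebra_simps power2_eq_square)
    thus ?thesis
      using Pxy by blast
  qed
qed

lemma is_arc_pedal:
  assumes "\<beta> \<in> subF q"
  shows "is_arc (pedal (U_ab q \<alpha> \<beta>) (Aff x0 y0))"
proof (rule is_arc_subset[OF _ pedal_subset_parabola[OF assms]])
  have "is_arc {Aff x ((2 * \<alpha>) * x^2 + (- 2 * \<alpha> * x0) * x + y0) | x. True}"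
    using alpha_neq_0_if_beta_in_subF[OF assms] two_neq_zero by (intro parabola_is_arc) simp
  moreover have "(2 * \<alpha>) * x^2 + (- 2 * \<alpha> * x0) * x + y0 = 2 * \<alpha> * x^2 - 2 * \<alpha> * x0 * x + y0" for x
    by (simp add: algebra_simps)
  ultimately show "is_arc {Aff x (2 * \<alpha> * x^2 - 2 * \<alpha> * x0 * x + y0) | x. True}"
    by simp
qed

end

section \<open>Conic Buekenhout--Metz unitals\<close>

locale conic_in_BM_unital = BM_unital +
  fixes a b c d e f :: 'a
  assumes polar_det: "polar_det a b c d e f \<noteq> 0"
    and conic_subset: "conic a b c d e f \<subseteq> U_ab q \<alpha> \<beta>"
begin

lemma Dir_notin_conic: "Dir m \<notin> conic a b c d e f"
  using conic_subset Dir_notin_U_ab by blast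

text \<open>A line through a point of the conic meeting the conic again is a secant of the unital,
  so the tangent of the unital is also the tangent of the conic.\<close>
lemma tangent_slope_tangent_to_conic:
  assumes P: "Aff x y \<in> conic a b c d e f"
  shows "(2 * a * x + d * y + e) + tangent_slope x * (2 * b * y + d * x + f) = 0"
proof (rule ccontr)
  assume "\<not> ?thesis"
  then obtain u where "u \<noteq> 0" "Aff (x + u) (y + tangent_slope x * u) \<in> conic a b c d e f"
    using conic_secant_second_point[OF P Dir_notin_conic] by blast
  thus False
    using tangent_line_meets_U_ab_once P conic_subset by blast
qed

text \<open>If \<open>b \<noteq> 0\<close>, the vertical line through a point of the conic meets it in a second point
  with the same tangent slope; comparing the two tangency conditions pins down the
  \<open>x\<close>-coordinate, so all points of the conic would lie on one vertical line.\<close>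
lemma x_coordinate_if_b_neq_0:
  assumes b: "b \<noteq> 0" and P: "Aff x y \<in> conic a b c d e f"
  shows "(4 * a * b - d^2) * x = d * f - 2 * b * e"
proof -
  define m where "m = tangent_slope x"
  define gy where "gy = 2 * b * y + d * x + f"
  have tangent: "(2 * a * x + d * y + e) + m * gy = 0"
    using tangent_slope_tangent_to_conic[OF P] by (simp add: m_def gy_def)
  have "gy \<noteq> 0"
    using conic_gradient_neq_0[OF polar_det P] tangent by (auto simp: gy_def)
  define v where "v = - gy / b"
  have "v \<noteq> 0"
    using \<open>gy \<noteq> 0\<close> b by (simp add: v_def)
  have "gy + b * v = 0"
    using b by (simp add: v_def)
  have "a * x^2 + b * (y + v)^2 + c + d * x * (y + v) + e * x + f * (y + v)
      = (a * x^2 + b * y^2 + c + d * x * y + e * x + f * y) + v * (gy + b * v)"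
    by (simp add: gy_def algebra_simps power2_eq_square)
  also have "\<dots> = 0"
    unfolding \<open>gy + b * v = 0\<close> using P by simp
  finally have "Aff x (y + v) \<in> conic a b c d e f"
    by simp
  from tangent_slope_tangent_to_conic[OF this]
  have "(2 * a * x + d * (y + v) + e) + m * (2 * b * (y + v) + d * x + f) = 0"
    by (simp add: m_def)
  moreover have "v * (d + 2 * b * m) =
      ((2 * a * x + d * (y + v) + e) + m * (2 * b * (y + v) + d * x + f)) - ((2 * a * x + d * y + e) + m * gy)"
    by (simp add: gy_def algebra_simps)
  ultimately have "d + 2 * b * m = 0"
    using tangent \<open>v \<noteq> 0\<close> by simp
  moreover have "(4 * a * b - d^2) * x - (d * f - 2 * b * e) = 2 * b * ((2 * a * x + d * y + e) + m * gy) - (d + 2 * b * m) * gy"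
    by (simp add: gy_def algebra_simps power2_eq_square)
  ultimately show ?thesis
    using tangent by simp
qed

lemma b_eq_0: "b = 0"
proof (rule ccontr)
  assume b: "b \<noteq> 0"
  obtain x y where P: "Aff x y \<in> conic a b c d e f"
    using conic_ex_affine_point[OF two_neq_zero b Dir_notin_conic] by blast
  obtain u y' where u: "u \<noteq> 0" "Aff (x + u) y' \<in> conic a b c d e f"
  proof (cases "2 * a * x + d * y + e = 0")
    case False
    thus thesis
      using conic_secant_second_point[OF P Dir_notin_conic, of 0] that by auto
  next
    case True
    hence "2 * b * y + d * x + f \<noteq> 0"
      using conic_gradient_neq_0[OF polar_det P] by auto
    thus thesis
      using conic_secant_second_point[OF P Dir_notin_conic, of 1] that True by auto
  qed
  have "4 * a * b - d^2 \<noteq> 0"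
    using conic_discriminant_neq_0[OF two_neq_zero b Dir_notin_conic] by (simp add: algebra_simps)
  moreover have "(4 * a * b - d^2) * x = (4 * a * b - d^2) * (x + u)"
    using x_coordinate_if_b_neq_0[OF b P] x_coordinate_if_b_neq_0[OF b u(2)] by simp
  ultimately show False
    using u(1) by simp
qed

lemma d_eq_0: "d = 0"
proof (rule ccontr)
  assume "d \<noteq> 0"
  hence "Dir (- a / d) \<in> conic a b c d e f"
    using b_eq_0 by simp
  thus False
    using Dir_notin_conic by blast
qed

lemma f_neq_0: "f \<noteq> 0"
proof
  assume "f = 0"
  hence "polar_det a b c d e f = 0"
    using b_eq_0 d_eq_0 by (simp add: polar_det_def)
  thus False
    using polar_det by simp
qed

text \<open>With \<open>b = d = 0\<close> the conic is a graph over every \<open>x\<close>, and its tangency condition is an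
  identity in \<open>x\<close> and \<open>x\<^sup>q\<close> whose \<open>x\<^sup>q\<close>-coefficient is \<open>(\<beta> - \<beta>\<^sup>q) f\<close>.\<close>
theorem beta_in_subF: "\<beta> \<in> subF q"
proof -
  note b = b_eq_0 and d = d_eq_0 and f = f_neq_0
  have tangent: "2 * a * x + e + tangent_slope x * f = 0" for x
  proof -
    have "Aff x (- (a * x^2 + e * x + c) / f) \<in> conic a b c d e f"
      using b d f by (simp add: field_simps)
    from tangent_slope_tangent_to_conic[OF this] show ?thesis
      using b d by simp
  qed
  have "tangent_slope 0 = 0"
    using q_ge_3 by (simp add: tangent_slope_def)
  hence e: "e = 0"
    using tangent[of 0] by simp
  obtain \<epsilon> :: 'a where \<epsilon>: "\<epsilon> \<notin> subF q"
    using ex_not_in_subF by blast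
  define \<delta> where "\<delta> = \<beta> - \<beta>^q"
  have "\<delta> * f * (\<epsilon>^q - \<epsilon>) = (2 * a * \<epsilon> + e + tangent_slope \<epsilon> * f) - \<epsilon> * (2 * a * 1 + e + tangent_slope 1 * f)"
    using e by (simp add: tangent_slope_def \<delta>_def algebra_simps)
  also have "\<dots> = 0"
    unfolding tangent by simp
  finally have "\<delta> = 0"
    using f \<epsilon> by (simp add: subF_def)
  thus ?thesis
    by (simp add: \<delta>_def subF_def)
qed

end

lemma (in BM_unital) beta_in_subF_if_conic_subset:
  assumes "nondeg_conic C" "C \<subseteq> U_ab q \<alpha> \<beta>"
  shows "\<beta> \<in> subF q"
proof -
  obtain a b c d e f where "polar_det a b c d e f \<noteq> 0" "C = conic a b c d e f"
    using assms(1) by (auto simp: nondeg_conic_iff)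
  then interpret conic_in_BM_unital q field_type \<alpha> \<beta> a b c d e f
    using assms(2) by unfold_locales simp_all
  show ?thesis
    by (rule beta_in_subF)
qed

context collineation_fixing_line_inf
begin

lemma vimage_subset: "C \<subseteq> \<sigma> ` U \<Longrightarrow> U \<subseteq> points \<Longrightarrow> {P \<in> points. \<sigma> P \<in> C} \<subseteq> U"
  using inj_on_points by (auto dest: inj_onD)

lemma is_arc_pedal_image:
  assumes "U \<subseteq> points" "Q \<in> points" "is_arc (pedal U Q)"
  shows "is_arc (pedal (\<sigma> ` U) (\<sigma> Q))"
proof (rule is_arc_subset[OF is_arc_image[OF collineation] pedal_image_subset[OF collineation assms(1, 2)]])
  show "pedal U Q \<subseteq> points"
    using assms(1) by (auto simp: pedal_def)
qed (rule assms(3))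

lemma obtain_affine_preimage:
  assumes "Q \<in> points" "Q \<notin> line_inf"
  obtains x y where "Q = \<sigma> (Aff x y)"
proof -
  have "Q \<in> \<sigma> ` points"
    using assms(1) collineation by (simp add: collineation_def bij_betw_def)
  then obtain P where P: "P \<in> points" "\<sigma> P = Q"
    by blast
  hence "P \<notin> line_inf"
    using assms(2) in_line_inf_iff by auto
  then obtain x y where "P = Aff x y"
    using P(1) by (elim affine_point_cases)
  thus thesis
    using that P(2) by blast
qed

end

theorem theorem2p9:
  fixes q :: nat and U :: "('a::{field, finite}) ppoint set" and Q :: "'a ppoint"
  assumes "card (UNIV :: 'a set) = q ^ 2"
    and "odd q"
    and "conic_BM_unital q U"
    and "Q \<in> points"
    and "Q \<notin> U"
    and "Q \<notin> line_inf"
  shows "is_arc (pedal U Q)"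
proof -
  obtain \<sigma> \<alpha> \<beta> C where \<sigma>: "collineation \<sigma>" "\<sigma> ` line_inf = line_inf"
    and BM: "BM_params_ok q \<alpha> \<beta>" and U: "U = \<sigma> ` U_ab q \<alpha> \<beta>"
    and C: "nondeg_conic C" "C \<subseteq> U"
    using assms(3) by (auto simp: conic_BM_unital_def orth_BM_unital_def)
  interpret \<sigma>: collineation_fixing_line_inf \<sigma>
    using \<sigma> by unfold_locales
  interpret BM_unital q "TYPE('a)" \<alpha> \<beta>
    using assms(1, 2) BM by unfold_locales
  have "\<beta> \<in> subF q"
    using C U_ab_subset_points unfolding U
    by (intro beta_in_subF_if_conic_subset[OF \<sigma>.nondeg_conic_vimage \<sigma>.vimage_subset])
  moreover obtain x0 y0 where Q: "Q = \<sigma> (Aff x0 y0)"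
    using assms(4, 6) by (rule \<sigma>.obtain_affine_preimage)
  ultimately show ?thesis
    unfolding U Q using U_ab_subset_points is_arc_pedal by (intro \<sigma>.is_arc_pedal_image) simp_all
qed

end
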